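(* Let $n\ge2$, $h(q)=(e^{-|q_i-q_j|})_{i,j}$ and $g=h^{-1}$. Let $t\mapsto q(t)$, $t\in[0,t^* )$, be a geodesic of $g$ with $q_1(t)>\dots>q_n(t)$, and $p(t)=g(\dot q(t),\cdot)$, which approaches the singular set $\{q_k=q_{k+1}\}$ at time $t^*$: $q(t)\to q^*$ as $t\to t^*$ with $q^*_k=q^*_{k+1}$ and the other coordinates of $q^*$ pairwise distinct. Then the limits $\lim_{t\to t^*}(p_k(t)+p_{k+1}(t))$ and $\lim_{t\to t^*}p_j(t)$, $j\ne k,k+1$, exist and are finite. Moreover, the limit $V=\lim_{t\to t^*}\dot q(t)$ exists and is tangent to the singular set (i.e. $V_k=V_{k+1}$). Finally, the restriction $\tilde g$ of $g$ to the singular set is a well-defined $(n-1)$-dimensional Riemannian metric and $\tilde g(V,V)\le g(\dot q,\dot q)$.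
   Context: The singular set $\{q_k=q_{k+1}\}$ is parametrized by $(q_1,\dots,q_{n-1})\mapsto(q_1,\dots,q_{k-1},q_k,q_k,q_{k+1},\dots,q_{n-1})$; the restriction $\tilde g$ of $g$ to it means the limit of $g$ evaluated on vectors tangent to this set (vectors with equal $k$-th and $(k+1)$-th components) as $q_k-q_{k+1}\to0$. The quantity $g(\dot q,\dot q)$ is constant along the geodesic. *)

theory Defs
  imports "HOL-Analysis.Analysis"
begin

text \<open>Vectors in R^n are functions nat => real (only indices < n matter);
  n x n matrices are functions nat => nat => real (only indices < n matter).
  Indices are 0-based: the paper's q_1,...,q_n are q 0, ..., q (n-1).\<close>

definition hmat :: "(nat \<Rightarrow> real) \<Rightarrow> nat \<Rightarrow> nat \<Rightarrow> real" where
  "hmat q i j = exp (- \<bar>q i - q j\<bar>)"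

definition mat_inv :: "nat \<Rightarrow> (nat \<Rightarrow> nat \<Rightarrow> real) \<Rightarrow> nat \<Rightarrow> nat \<Rightarrow> real" where
  "mat_inv n A = (THE B. (\<forall>i j. (n \<le> i \<or> n \<le> j) \<longrightarrow> B i j = 0) \<and>
      (\<forall>i<n. \<forall>j<n. (\<Sum>l<n. A i l * B l j) = (if i = j then 1 else 0)))"

definition gmat :: "nat \<Rightarrow> (nat \<Rightarrow> real) \<Rightarrow> nat \<Rightarrow> nat \<Rightarrow> real" where
  "gmat n q = mat_inv n (hmat q)"

definition bilin :: "nat \<Rightarrow> (nat \<Rightarrow> nat \<Rightarrow> real) \<Rightarrow> (nat \<Rightarrow> real) \<Rightarrow> (nat \<Rightarrow> real) \<Rightarrow> real" where
  "bilin n G u w = (\<Sum>a<n. \<Sum>b<n. G a b * u a * w b)"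

definition pdiff :: "nat \<Rightarrow> ((nat \<Rightarrow> real) \<Rightarrow> real) \<Rightarrow> (nat \<Rightarrow> real) \<Rightarrow> real" where
  "pdiff i f y = deriv (\<lambda>s. f (y(i := y i + s))) 0"

definition chamber :: "nat \<Rightarrow> (nat \<Rightarrow> real) set" where
  "chamber m = {y. \<forall>i j. i < j \<longrightarrow> j < m \<longrightarrow> y j < y i}"

text \<open>Geodesic of g on [0,ts), written in Lagrangian (Euler--Lagrange) form with
  qd the velocity and p = g(qd, .) the momentum:
  d/dt p_i = 1/2 sum_{a,b} (d_i g_ab)(q) qd_a qd_b.\<close>
definition geodesic :: "nat \<Rightarrow> real \<Rightarrow> (real \<Rightarrow> nat \<Rightarrow> real) \<Rightarrow> (real \<Rightarrow> nat \<Rightarrow> real)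
     \<Rightarrow> (real \<Rightarrow> nat \<Rightarrow> real) \<Rightarrow> bool" where
  "geodesic n ts q qd p \<longleftrightarrow>
     (\<forall>t\<in>{0..<ts}. \<forall>i<n.
        ((\<lambda>s. q s i) has_real_derivative qd t i) (at t within {0..<ts}) \<and>
        p t i = (\<Sum>j<n. gmat n (q t) i j * qd t j) \<and>
        ((\<lambda>s. p s i) has_real_derivative
           ((1/2) * (\<Sum>a<n. \<Sum>b<n. pdiff i (\<lambda>y. gmat n y a b) (q t) * qd t a * qd t b)))
           (at t within {0..<ts}))"

text \<open>Embedding of R^(n-1) onto the singular set {q_k = q_(k+1)} (duplicate k-th coordinate)
  and the corresponding projection (drop coordinate k+1).\<close>
definition dup :: "nat \<Rightarrow> (nat \<Rightarrow> real) \<Rightarrow> nat \<Rightarrow> real" where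
  "dup k x = (\<lambda>i. if i \<le> k then x i else x (i - 1))"

definition dropc :: "nat \<Rightarrow> (nat \<Rightarrow> real) \<Rightarrow> nat \<Rightarrow> real" where
  "dropc k v = (\<lambda>i. if i \<le> k then v i else v (i + 1))"

definition tends_within :: "nat \<Rightarrow> ((nat \<Rightarrow> real) \<Rightarrow> real) \<Rightarrow> real \<Rightarrow> (nat \<Rightarrow> real)
     \<Rightarrow> (nat \<Rightarrow> real) set \<Rightarrow> bool" where
  "tends_within m f L x S \<longleftrightarrow>
     (\<forall>e>0. \<exists>d>0. \<forall>y\<in>S. (\<forall>i<m. \<bar>y i - x i\<bar> < d) \<longrightarrow> \<bar>f y - L\<bar> < e)"

definition smooth_fn :: "nat \<Rightarrow> (nat \<Rightarrow> real) set \<Rightarrow> ((nat \<Rightarrow> real) \<Rightarrow> real) \<Rightarrow> bool" where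
  "smooth_fn m D f \<longleftrightarrow>
     (\<forall>ds. set ds \<subseteq> {..<m} \<longrightarrow>
        (\<forall>x\<in>D. tends_within m (foldr pdiff ds f) (foldr pdiff ds f x) x D) \<and>
        (\<forall>x\<in>D. \<forall>i<m. ((\<lambda>s. foldr pdiff ds f (x(i := x i + s))) has_real_derivative
                           pdiff i (foldr pdiff ds f) x) (at 0)))"

definition riemannian :: "nat \<Rightarrow> (nat \<Rightarrow> real) set \<Rightarrow> ((nat \<Rightarrow> real) \<Rightarrow> nat \<Rightarrow> nat \<Rightarrow> real) \<Rightarrow> bool" where
  "riemannian m D G \<longleftrightarrow>
     (\<forall>a<m. \<forall>b<m. smooth_fn m D (\<lambda>x. G x a b)) \<and>
     (\<forall>x\<in>D. \<forall>a<m. \<forall>b<m. G x a b = G x b a) \<and>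
     (\<forall>x\<in>D. \<forall>u. (\<exists>i<m. u i \<noteq> 0) \<longrightarrow> bilin m (G x) u u > 0)"

end

theory Submission
  imports Defs
begin

text \<open>On the chamber \<open>y\<^sub>0 > \<dots> > y\<^sub>n\<^sub>-\<^sub>1\<close> the matrix \<open>h\<close> can be inverted explicitly:
  \<open>g(u, u) = u\<^sub>0\<^sup>2 + \<Sum>\<^sub>r (u\<^sub>r\<^sub>+\<^sub>1 - e\<^sub>r u\<^sub>r)\<^sup>2 / (1 - e\<^sub>r\<^sup>2)\<close> with \<open>e\<^sub>r = exp (y\<^sub>r\<^sub>+\<^sub>1 - y\<^sub>r)\<close>.
  At a collision \<open>y\<^sub>k = y\<^sub>k\<^sub>+\<^sub>1\<close> only the \<open>k\<close>-th summand degenerates; on vectors with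
  \<open>u\<^sub>k = u\<^sub>k\<^sub>+\<^sub>1\<close> it equals \<open>u\<^sub>k\<^sup>2 (1 - e\<^sub>k) / (1 + e\<^sub>k) \<rightarrow> 0\<close>, and the remaining summands
  are the same form in dimension \<open>n - 1\<close>: this is the restricted metric.

  Along the geodesic the energy \<open>E = g(q', q') = \<langle>p, h p\<rangle>\<close> is conserved, so Cauchy--Schwarz
  gives \<open>\<langle>p, U\<rangle>\<^sup>2 \<le> E g(U, U)\<close>. For \<open>U = \<delta>\<^sub>j\<close> (\<open>j \<noteq> k, k+1\<close>) and \<open>U = \<delta>\<^sub>k + \<delta>\<^sub>k\<^sub>+\<^sub>1\<close> the
  right-hand side stays bounded, which bounds \<open>p\<^sub>j\<close>, \<open>p\<^sub>k + p\<^sub>k\<^sub>+\<^sub>1\<close> and \<open>q'\<close>. In the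
  Hamiltonian equations \<open>p\<^sub>i' = p\<^sub>i \<Sum>\<^sub>c sgn (c - i) h\<^sub>i\<^sub>c p\<^sub>c\<close> the products \<open>p\<^sub>k p\<^sub>k\<^sub>+\<^sub>1\<close>
  cancel in \<open>p\<^sub>k' + p\<^sub>k\<^sub>+\<^sub>1'\<close>, so these derivatives are bounded and the limits exist.
  With \<open>U = \<delta>\<^sub>k - \<delta>\<^sub>k\<^sub>+\<^sub>1\<close> one gets \<open>(1 - e\<^sub>k)(p\<^sub>k - p\<^sub>k\<^sub>+\<^sub>1) \<rightarrow> 0\<close>, which kills the only
  possibly divergent part of \<open>q' = h p\<close>; hence \<open>q' \<rightarrow> V\<close> with \<open>V\<^sub>k = V\<^sub>k\<^sub>+\<^sub>1\<close>. Finally the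
  restricted energy of \<open>V\<close> is the limit of \<open>E\<close> minus the nonnegative \<open>k\<close>-th summand.\<close>

section \<open>The explicit inverse of \<open>h\<close> on the chamber\<close>

lemma chamberD: "y \<in> chamber m \<Longrightarrow> i < j \<Longrightarrow> j < m \<Longrightarrow> y j < y i"
  by (simp add: chamber_def)

lemma hmat_sym: "hmat y a b = hmat y b a"
  by (simp add: hmat_def abs_minus_commute)

lemma hmat_diag: "hmat y a a = 1"
  by (simp add: hmat_def)

lemma hmat_pos: "0 < hmat y a b"
  by (simp add: hmat_def)

lemma hmat_le_1: "hmat y a b \<le> 1"
  by (simp add: hmat_def)

lemma hmat_chamber_le: "y \<in> chamber m \<Longrightarrow> i < m \<Longrightarrow> j \<le> i \<Longrightarrow> hmat y i j = exp (y i - y j)"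
  by (cases "j = i") (auto simp: hmat_def dest: chamberD[of y m j i])

lemma hmat_chamber_ge: "y \<in> chamber m \<Longrightarrow> j < m \<Longrightarrow> i \<le> j \<Longrightarrow> hmat y i j = exp (y j - y i)"
  using hmat_chamber_le[of y m j i] by (simp add: hmat_sym)

definition ord_sign :: "nat \<Rightarrow> nat \<Rightarrow> real" where
  "ord_sign a b = (if a < b then 1 else if b < a then -1 else 0)"

lemma ord_sign_swap: "ord_sign b a = - ord_sign a b"
  by (simp add: ord_sign_def)

lemma hmat_chamber: "y \<in> chamber m \<Longrightarrow> a < m \<Longrightarrow> b < m \<Longrightarrow> hmat y a b = exp (ord_sign a b * (y b - y a))"
  by (cases a b rule: linorder_cases) (auto simp: ord_sign_def hmat_chamber_le hmat_chamber_ge)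

definition gap_exp :: "(nat \<Rightarrow> real) \<Rightarrow> nat \<Rightarrow> real" where
  "gap_exp y r = exp (y (Suc r) - y r)"

definition gap_form :: "(nat \<Rightarrow> real) \<Rightarrow> nat \<Rightarrow> (nat \<Rightarrow> real) \<Rightarrow> real" where
  "gap_form y r u = u (Suc r) - gap_exp y r * u r"

definition gform :: "nat \<Rightarrow> (nat \<Rightarrow> real) \<Rightarrow> (nat \<Rightarrow> real) \<Rightarrow> (nat \<Rightarrow> real) \<Rightarrow> real" where
  "gform m y u w = u 0 * w 0 + (\<Sum>r<m-1. gap_form y r u * gap_form y r w / (1 - (gap_exp y r)^2))"

definition basis_vec :: "nat \<Rightarrow> nat \<Rightarrow> real" where
  "basis_vec a = (\<lambda>i. if i = a then 1 else 0)"

definition gmat_expl :: "nat \<Rightarrow> (nat \<Rightarrow> real) \<Rightarrow> nat \<Rightarrow> nat \<Rightarrow> real" where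
  "gmat_expl m y a b = (if a < m \<and> b < m then gform m y (basis_vec a) (basis_vec b) else 0)"

lemma gap_exp_pos: "0 < gap_exp y r"
  by (simp add: gap_exp_def)

lemma gap_exp_less_1: "y \<in> chamber m \<Longrightarrow> Suc r < m \<Longrightarrow> gap_exp y r < 1"
  by (auto simp: gap_exp_def dest: chamberD[of y m r "Suc r"])

lemma one_minus_gap_exp_sq_pos: "y \<in> chamber m \<Longrightarrow> Suc r < m \<Longrightarrow> 0 < 1 - (gap_exp y r)^2"
  using gap_exp_less_1[of y m r] gap_exp_pos[of y r] by (simp add: power_less_one_iff)

lemma sum_basis_vec_left: "(\<Sum>a<m. basis_vec a j * u a) = (if j < m then u j else 0)"
  by (simp add: basis_vec_def if_distrib[of "\<lambda>x. x * _"] sum.delta cong: if_cong)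

lemma sum_basis_vec_right: "(\<Sum>b<m. u b * basis_vec j b) = (if j < m then u j else 0)"
  using sum_basis_vec_left[where m=m and j=j and u=u] by (simp add: basis_vec_def mult.commute eq_commute)

lemma gap_form_expand:
  assumes "Suc r < m"
  shows "gap_form y r u = (\<Sum>a<m. gap_form y r (basis_vec a) * u a)"
proof -
  have "(\<Sum>a<m. gap_form y r (basis_vec a) * u a)
      = (\<Sum>a<m. basis_vec a (Suc r) * u a) - gap_exp y r * (\<Sum>a<m. basis_vec a r * u a)"
    by (simp add: gap_form_def algebra_simps sum_subtractf sum_distrib_left)
  also have "\<dots> = gap_form y r u"
    using assms by (simp add: gap_form_def sum_basis_vec_left)
  finally show ?thesis by simp
qed

lemma sum_swap3: "(\<Sum>a\<in>A. \<Sum>b\<in>B. \<Sum>r\<in>C. f a b r) = (\<Sum>r\<in>C. \<Sum>a\<in>A. \<Sum>b\<in>B. f a b r)"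
  by (simp add: sum.swap[of _ B C] sum.swap[of _ A C])

lemma gform_commute: "gform m y u w = gform m y w u"
  unfolding gform_def by (simp add: mult.commute)

lemma gform_expand:
  assumes "0 < m"
  shows "gform m y u w = (\<Sum>a<m. \<Sum>b<m. gform m y (basis_vec a) (basis_vec b) * u a * w b)"
proof -
  have "u 0 = (\<Sum>a<m. basis_vec a 0 * u a)" "w 0 = (\<Sum>b<m. basis_vec b 0 * w b)"
    using assms by (simp_all add: sum_basis_vec_left)
  then have first: "(\<Sum>a<m. \<Sum>b<m. basis_vec a 0 * basis_vec b 0 * u a * w b) = u 0 * w 0"
    by (simp add: sum_product mult_ac)
  have gap: "(\<Sum>a<m. \<Sum>b<m. gap_form y r (basis_vec a) * gap_form y r (basis_vec b) / c * u a * w b)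
      = gap_form y r u * gap_form y r w / c" if "r < m - 1" for r c
    using that gap_form_expand[where r=r and m=m and y=y and u=u] gap_form_expand[where r=r and m=m and y=y and u=w]
    by (simp add: sum_product sum_divide_distrib mult_ac)
  have "(\<Sum>a<m. \<Sum>b<m. gform m y (basis_vec a) (basis_vec b) * u a * w b)
      = (\<Sum>a<m. \<Sum>b<m. basis_vec a 0 * basis_vec b 0 * u a * w b) +
        (\<Sum>r<m-1. \<Sum>a<m. \<Sum>b<m. gap_form y r (basis_vec a) * gap_form y r (basis_vec b)
            / (1 - (gap_exp y r)^2) * u a * w b)"
    unfolding gform_def
    by (simp add: algebra_simps sum.distrib sum_distrib_left sum_distrib_right) (subst sum_swap3, simp)
  also have "\<dots> = gform m y u w"
    using first gap by (simp add: gform_def)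
  finally show ?thesis by simp
qed

text \<open>The gap forms with \<open>r \<ge> i\<close> annihilate row \<open>i\<close> of \<open>h\<close>, the others map it to
  \<open>h\<^sub>i\<^sub>,\<^sub>r\<^sub>+\<^sub>1 (1 - e\<^sub>r\<^sup>2)\<close>; paired with \<open>\<delta>\<^sub>j\<close> this gives a telescoping sum.\<close>

lemma gap_form_hmat_row:
  assumes y: "y \<in> chamber m" and i: "i < m" and r: "Suc r < m"
  shows "gap_form y r (\<lambda>l. hmat y i l) = (if r < i then hmat y i (Suc r) * (1 - (gap_exp y r)^2) else 0)"
proof (cases "r < i")
  case True
  have "gap_exp y r * exp (y i - y r) = exp (y i - y (Suc r)) * (gap_exp y r)^2"
    by (simp add: gap_exp_def power2_eq_square flip: exp_add)
  then show ?thesis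
    using True y i by (simp add: gap_form_def hmat_chamber_le algebra_simps)
next
  case False
  have "gap_exp y r * exp (y r - y i) = exp (y (Suc r) - y i)"
    by (simp add: gap_exp_def flip: exp_add)
  then show ?thesis
    using False y r by (simp add: gap_form_def hmat_chamber_ge)
qed

lemma hmat_row_step: "y \<in> chamber m \<Longrightarrow> i < m \<Longrightarrow> r < i \<Longrightarrow> gap_exp y r * hmat y i (Suc r) = hmat y i r"
  by (simp add: hmat_chamber_le gap_exp_def flip: exp_add)

lemma gform_hmat_row_basis:
  assumes y: "y \<in> chamber m" and i: "i < m" and j: "j < m"
  shows "gform m y (\<lambda>l. hmat y i l) (basis_vec j) = (if i = j then 1 else 0)"
proof -
  have "(\<Sum>r<m-1. gap_form y r (\<lambda>l. hmat y i l) * gap_form y r (basis_vec j) / (1 - (gap_exp y r)^2))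
      = (\<Sum>r<m-1. if r < i then hmat y i (Suc r) * basis_vec j (Suc r) - hmat y i r * basis_vec j r else 0)"
  proof (rule sum.cong[OF refl])
    fix r assume "r \<in> {..<m-1}"
    then have r: "Suc r < m" by auto
    have nz: "1 - (gap_exp y r)^2 \<noteq> 0" using one_minus_gap_exp_sq_pos[OF y r] by simp
    show "gap_form y r (\<lambda>l. hmat y i l) * gap_form y r (basis_vec j) / (1 - (gap_exp y r)^2) =
      (if r < i then hmat y i (Suc r) * basis_vec j (Suc r) - hmat y i r * basis_vec j r else 0)"
    proof (cases "r < i")
      case True
      have "gap_form y r (\<lambda>l. hmat y i l) * gap_form y r (basis_vec j) / (1 - (gap_exp y r)^2)
          = hmat y i (Suc r) * (basis_vec j (Suc r) - gap_exp y r * basis_vec j r)"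
        using nz True gap_form_hmat_row[OF y i r] by (simp add: gap_form_def[of y r "basis_vec j"])
      also have "\<dots> = hmat y i (Suc r) * basis_vec j (Suc r) - (gap_exp y r * hmat y i (Suc r)) * basis_vec j r"
        by (simp add: algebra_simps)
      finally show ?thesis using True hmat_row_step[OF y i True] by simp
    qed (simp add: gap_form_hmat_row[OF y i r])
  qed
  also have "\<dots> = (\<Sum>r<i. hmat y i (Suc r) * basis_vec j (Suc r) - hmat y i r * basis_vec j r)"
  proof -
    have "{r\<in>{..<m-1}. r < i} = {..<i}" using i by auto
    then show ?thesis by (simp add: sum.inter_filter[symmetric])
  qed
  also have "\<dots> = hmat y i i * basis_vec j i - hmat y i 0 * basis_vec j 0"
    by (rule sum_lessThan_telescope)
  finally show ?thesis by (simp add: gform_def hmat_diag basis_vec_def)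
qed

lemma gmat_expl_sym: "gmat_expl m y a b = gmat_expl m y b a"
  by (auto simp: gmat_expl_def gform_commute)

lemma hmat_gmat_expl:
  assumes y: "y \<in> chamber m" and i: "i < m" and j: "j < m"
  shows "(\<Sum>l<m. hmat y i l * gmat_expl m y l j) = (if i = j then 1 else 0)"
proof -
  have m: "0 < m" using i by simp
  have "gform m y (\<lambda>l. hmat y i l) (basis_vec j)
      = (\<Sum>a<m. \<Sum>b<m. (gform m y (basis_vec a) (basis_vec b) * hmat y i a) * basis_vec j b)"
    by (subst gform_expand[OF m]) simp
  also have "\<dots> = (\<Sum>a<m. gform m y (basis_vec a) (basis_vec j) * hmat y i a)"
    using j by (simp only: sum_basis_vec_right) simp
  also have "\<dots> = (\<Sum>l<m. hmat y i l * gmat_expl m y l j)"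
    using j by (intro sum.cong) (auto simp: gmat_expl_def)
  finally show ?thesis using gform_hmat_row_basis[OF y i j] by simp
qed

lemma gmat_expl_hmat:
  assumes y: "y \<in> chamber m" and i: "i < m" and j: "j < m"
  shows "(\<Sum>l<m. gmat_expl m y i l * hmat y l j) = (if i = j then 1 else 0)"
proof -
  have "(\<Sum>l<m. gmat_expl m y i l * hmat y l j) = (\<Sum>l<m. hmat y j l * gmat_expl m y l i)"
    by (intro sum.cong) (auto simp: gmat_expl_sym hmat_sym)
  then show ?thesis using hmat_gmat_expl[OF y j i] by auto
qed

text \<open>A right inverse of \<open>h\<close> coincides with its left inverse \<open>gmat_expl\<close>, so the
  description in \<open>mat_inv\<close> is unique.\<close>

lemma gmat_chamber:
  assumes y: "y \<in> chamber m"
  shows "gmat m y = gmat_expl m y"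
  unfolding gmat_def mat_inv_def
proof (rule the_equality)
  show "(\<forall>i j. (m \<le> i \<or> m \<le> j) \<longrightarrow> gmat_expl m y i j = 0) \<and>
    (\<forall>i<m. \<forall>j<m. (\<Sum>l<m. hmat y i l * gmat_expl m y l j) = (if i = j then 1 else 0))"
    using hmat_gmat_expl[OF y] by (auto simp: gmat_expl_def)
next
  fix B assume B: "(\<forall>i j. (m \<le> i \<or> m \<le> j) \<longrightarrow> B i j = 0) \<and>
    (\<forall>i<m. \<forall>j<m. (\<Sum>l<m. hmat y i l * B l j) = (if i = j then 1 else 0))"
  show "B = gmat_expl m y"
  proof (intro ext)
    fix i j
    show "B i j = gmat_expl m y i j"
    proof (cases "i < m \<and> j < m")
      case True
      have "B i j = (\<Sum>l<m. (if i = l then 1 else 0) * B l j)"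
        using True by (simp add: if_distrib[of "\<lambda>x. x * _"] cong: if_cong)
      also have "\<dots> = (\<Sum>l<m. (\<Sum>r<m. gmat_expl m y i r * hmat y r l) * B l j)"
        using True gmat_expl_hmat[OF y] by (intro sum.cong) auto
      also have "\<dots> = (\<Sum>r<m. gmat_expl m y i r * (\<Sum>l<m. hmat y r l * B l j))"
        by (simp add: sum_distrib_left sum_distrib_right mult.assoc) (rule sum.swap)
      also have "\<dots> = (\<Sum>r<m. gmat_expl m y i r * (if r = j then 1 else 0))"
        using True B by (intro sum.cong) auto
      also have "\<dots> = gmat_expl m y i j"
        using True by (simp add: if_distrib[of "\<lambda>x. _ * x"] cong: if_cong)
      finally show ?thesis .
    next
      case False
      then show ?thesis using B by (auto simp: gmat_expl_def)
    qed
  qed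
qed

lemma bilin_gmat_expl: "0 < m \<Longrightarrow> bilin m (gmat_expl m y) u w = gform m y u w"
  by (simp add: bilin_def gform_expand gmat_expl_def)

lemma bilin_gmat: "y \<in> chamber m \<Longrightarrow> 0 < m \<Longrightarrow> bilin m (gmat m y) u w = gform m y u w"
  by (simp add: gmat_chamber bilin_gmat_expl)

section \<open>Positivity\<close>

definition gform_coord :: "(nat \<Rightarrow> real) \<Rightarrow> (nat \<Rightarrow> real) \<Rightarrow> nat \<Rightarrow> real" where
  "gform_coord y u r = (if r = 0 then u 0 else gap_form y (r - 1) u / sqrt (1 - (gap_exp y (r - 1))^2))"

lemma gform_sum_squares:
  assumes y: "y \<in> chamber m" and m: "0 < m"
  shows "gform m y u w = (\<Sum>r<m. gform_coord y u r * gform_coord y w r)"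
proof -
  obtain m' where m': "m = Suc m'" using m by (cases m) auto
  have "(\<Sum>r<m. gform_coord y u r * gform_coord y w r) = u 0 * w 0 + (\<Sum>r<m'. gform_coord y u (Suc r) * gform_coord y w (Suc r))"
    unfolding m' by (subst sum.lessThan_Suc_shift) (simp add: gform_coord_def)
  also have "(\<Sum>r<m'. gform_coord y u (Suc r) * gform_coord y w (Suc r)) = (\<Sum>r<m-1. gap_form y r u * gap_form y r w / (1 - (gap_exp y r)^2))"
  proof (rule sum.cong)
    fix r assume "r \<in> {..<m-1}"
    then have "Suc r < m" using m' by auto
    then have c: "0 < 1 - (gap_exp y r)^2" using one_minus_gap_exp_sq_pos[OF y] by blast
    have "sqrt (1 - (gap_exp y r)^2) * sqrt (1 - (gap_exp y r)^2) = 1 - (gap_exp y r)^2"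
      using c by simp
    then show "gform_coord y u (Suc r) * gform_coord y w (Suc r) = gap_form y r u * gap_form y r w / (1 - (gap_exp y r)^2)"
      by (simp add: gform_coord_def)
  qed (use m' in simp)
  finally show ?thesis by (simp add: gform_def)
qed

lemma gform_nonneg: "y \<in> chamber m \<Longrightarrow> 0 < m \<Longrightarrow> 0 \<le> gform m y u u"
  by (simp add: gform_sum_squares sum_nonneg)

lemma gform_Cauchy_Schwarz: "y \<in> chamber m \<Longrightarrow> 0 < m \<Longrightarrow> (gform m y u w)^2 \<le> gform m y u u * gform m y w w"
  using Cauchy_Schwarz_ineq_sum[of "gform_coord y u" "gform_coord y w" "{..<m}"]
  by (simp add: gform_sum_squares power2_eq_square)

lemma gform_pos:
  assumes y: "y \<in> chamber m" and m: "0 < m" and u: "\<exists>i<m. u i \<noteq> 0"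
  shows "0 < gform m y u u"
proof (rule ccontr)
  assume "\<not> 0 < gform m y u u"
  then have "(\<Sum>r<m. gform_coord y u r * gform_coord y u r) = 0" using gform_nonneg[OF y m, of u] gform_sum_squares[OF y m] by auto
  then have z: "\<forall>r<m. gform_coord y u r * gform_coord y u r = 0"
    by (subst (asm) sum_nonneg_eq_0_iff) auto
  have "\<forall>i<m. u i = 0"
  proof (intro allI impI)
    fix i assume "i < m" then show "u i = 0"
    proof (induction i)
      case 0 then show ?case using z by (auto simp: gform_coord_def)
    next
      case (Suc r)
      then have "u r = 0" by simp
      have "gform_coord y u (Suc r) = 0" using z Suc.prems by auto
      then have "gap_form y r u = 0" using one_minus_gap_exp_sq_pos[OF y Suc.prems] by (simp add: gform_coord_def)
      then show ?case using \<open>u r = 0\<close> by (simp add: gap_form_def)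
    qed
  qed
  then show False using u by auto
qed

lemma gform_expand_right:
  assumes m: "0 < m"
  shows "gform m y u w = (\<Sum>b<m. w b * gform m y u (basis_vec b))"
proof -
  have "gform m y u (basis_vec b) = (\<Sum>a<m. gform m y (basis_vec a) (basis_vec b) * u a)" if "b < m" for b
  proof -
    have "gform m y u (basis_vec b) = (\<Sum>a<m. \<Sum>c<m. (gform m y (basis_vec a) (basis_vec c) * u a) * basis_vec b c)"
      by (subst gform_expand[OF m]) simp
    also have "\<dots> = (\<Sum>a<m. gform m y (basis_vec a) (basis_vec b) * u a)" using that by (simp only: sum_basis_vec_right) simp
    finally show ?thesis .
  qed
  then have "(\<Sum>b<m. w b * gform m y u (basis_vec b))
      = (\<Sum>b<m. \<Sum>a<m. gform m y (basis_vec a) (basis_vec b) * u a * w b)"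
    by (intro sum.cong refl) (simp add: sum_distrib_left mult_ac)
  also have "\<dots> = gform m y u w" by (subst gform_expand[OF m]) (rule sum.swap)
  finally show ?thesis by simp
qed

lemma gmat_expl_pairing:
  assumes m: "0 < m"
  shows "(\<Sum>i<m. (\<Sum>j<m. gmat_expl m y i j * v j) * U i) = gform m y U v"
proof -
  have "(\<Sum>i<m. (\<Sum>j<m. gmat_expl m y i j * v j) * U i) = (\<Sum>i<m. \<Sum>j<m. gform m y (basis_vec i) (basis_vec j) * U i * v j)"
  proof (rule sum.cong[OF refl])
    fix i assume i: "i \<in> {..<m}"
    have "(\<Sum>j<m. gmat_expl m y i j * v j) * U i = (\<Sum>j<m. gmat_expl m y i j * v j * U i)"
      by (rule sum_distrib_right)
    also have "\<dots> = (\<Sum>j<m. gform m y (basis_vec i) (basis_vec j) * U i * v j)"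
      using i by (intro sum.cong) (auto simp: gmat_expl_def)
    finally show "(\<Sum>j<m. gmat_expl m y i j * v j) * U i = (\<Sum>j<m. gform m y (basis_vec i) (basis_vec j) * U i * v j)" .
  qed
  then show ?thesis using gform_expand[OF m, of y U v] by (simp only:)
qed

lemma hmat_gmat_expl_apply:
  assumes y: "y \<in> chamber m" and i: "i < m"
  shows "(\<Sum>j<m. hmat y i j * (\<Sum>l<m. gmat_expl m y j l * v l)) = v i"
proof -
  have "(\<Sum>j<m. hmat y i j * (\<Sum>l<m. gmat_expl m y j l * v l)) = (\<Sum>l<m. (\<Sum>j<m. hmat y i j * gmat_expl m y j l) * v l)"
  proof -
    have "(\<Sum>j<m. hmat y i j * (\<Sum>l<m. gmat_expl m y j l * v l)) = (\<Sum>j<m. \<Sum>l<m. hmat y i j * gmat_expl m y j l * v l)"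
      by (simp only: sum_distrib_left mult.assoc)
    also have "\<dots> = (\<Sum>l<m. \<Sum>j<m. hmat y i j * gmat_expl m y j l * v l)" by (rule sum.swap)
    also have "\<dots> = (\<Sum>l<m. (\<Sum>j<m. hmat y i j * gmat_expl m y j l) * v l)" by (simp only: sum_distrib_right)
    finally show ?thesis .
  qed
  also have "\<dots> = (\<Sum>l<m. (if i = l then v l else 0))"
    using hmat_gmat_expl[OF y i] by (intro sum.cong) auto
  finally show ?thesis using i by simp
qed

lemma gform_hmat_row_row:
  assumes y: "y \<in> chamber m" and i: "i < m"
  shows "gform m y (\<lambda>l. hmat y i l) (\<lambda>l. hmat y i l) = 1"
proof -
  have m: "0 < m" using i by simp
  have "gform m y (\<lambda>l. hmat y i l) (\<lambda>l. hmat y i l) = (\<Sum>b<m. hmat y i b * (if i = b then 1 else 0))"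
    using gform_hmat_row_basis[OF y i] by (subst gform_expand_right[OF m]) (intro sum.cong, auto)
  also have "\<dots> = (\<Sum>b<m. (if i = b then hmat y i b else 0))" by (intro sum.cong) auto
  finally show ?thesis using i by (simp add: hmat_diag)
qed

lemma gmat_expl_pairing_Cauchy_Schwarz:
  assumes y: "y \<in> chamber m" and m: "0 < m"
  shows "(\<Sum>i<m. (\<Sum>j<m. gmat_expl m y i j * v j) * U i)^2 \<le> gform m y U U * gform m y v v"
  using gmat_expl_pairing[OF m] gform_Cauchy_Schwarz[OF y m] by simp

lemma coord_sq_le_gform:
  assumes y: "y \<in> chamber m" and i: "i < m"
  shows "(v i)^2 \<le> gform m y v v"
proof -
  have m: "0 < m" using i by simp
  have "v i = (\<Sum>j<m. (\<Sum>l<m. gmat_expl m y j l * v l) * hmat y i j)"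
    using hmat_gmat_expl_apply[OF y i, of v] by (simp add: mult.commute)
  then show ?thesis using gmat_expl_pairing_Cauchy_Schwarz[OF y m, of v "\<lambda>l. hmat y i l"] gform_hmat_row_row[OF y i] by simp
qed

section \<open>Smoothness\<close>

definition coord_nhds :: "nat \<Rightarrow> (nat \<Rightarrow> real) \<Rightarrow> (nat \<Rightarrow> real) set \<Rightarrow> (nat \<Rightarrow> real) filter" where
  "coord_nhds m x S = (INF d\<in>{0<..}. principal {y\<in>S. \<forall>i<m. \<bar>y i - x i\<bar> < d})"

lemma eventually_coord_nhds:
  "eventually P (coord_nhds m x S) \<longleftrightarrow> (\<exists>d>0. \<forall>y\<in>S. (\<forall>i<m. \<bar>y i - x i\<bar> < d) \<longrightarrow> P y)"
  unfolding coord_nhds_def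
proof (subst eventually_INF_base)
  show "{0::real<..} \<noteq> {}" by auto
next
  fix a b :: real assume "a \<in> {0<..}" "b \<in> {0<..}"
  then show "\<exists>d\<in>{0<..}. principal {y \<in> S. \<forall>i<m. \<bar>y i - x i\<bar> < d} \<le>
      inf (principal {y \<in> S. \<forall>i<m. \<bar>y i - x i\<bar> < a}) (principal {y \<in> S. \<forall>i<m. \<bar>y i - x i\<bar> < b})"
    by (intro bexI[of _ "min a b"]) auto
qed (auto simp: eventually_principal)

lemma tends_within_coord_nhds: "(f \<longlongrightarrow> L) (coord_nhds m x S) \<Longrightarrow> tends_within m f L x S"
  unfolding tends_within_def tendsto_iff eventually_coord_nhds by (simp add: dist_real_def)

lemma tendsto_coord_nhds: "i < m \<Longrightarrow> ((\<lambda>y. y i) \<longlongrightarrow> x i) (coord_nhds m x S)"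
  unfolding tendsto_iff eventually_coord_nhds dist_real_def by (metis)

lemma eventually_coord_nhds_in: "eventually (\<lambda>y. y \<in> S) (coord_nhds m x S)"
  unfolding eventually_coord_nhds by (auto intro: exI[of _ 1])

text \<open>A syntactic class of smooth functions of \<open>m\<close> variables on \<open>D\<close>: it is closed under
  partial differentiation, so all iterated partial derivatives of its members exist and are
  continuous.\<close>

inductive elementary :: "nat \<Rightarrow> (nat \<Rightarrow> real) set \<Rightarrow> ((nat \<Rightarrow> real) \<Rightarrow> real) \<Rightarrow> bool" for m D where
  elementary_const: "elementary m D (\<lambda>x. c)"
| elementary_coord: "i < m \<Longrightarrow> elementary m D (\<lambda>x. x i)"
| elementary_add: "elementary m D f \<Longrightarrow> elementary m D g \<Longrightarrow> elementary m D (\<lambda>x. f x + g x)"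
| elementary_mult: "elementary m D f \<Longrightarrow> elementary m D g \<Longrightarrow> elementary m D (\<lambda>x. f x * g x)"
| elementary_exp: "elementary m D f \<Longrightarrow> elementary m D (\<lambda>x. exp (f x))"
| elementary_inverse: "elementary m D f \<Longrightarrow> (\<forall>x\<in>D. f x \<noteq> 0) \<Longrightarrow> elementary m D (\<lambda>x. inverse (f x))"

lemma elementary_minus: "elementary m D f \<Longrightarrow> elementary m D (\<lambda>x. - f x)"
  using elementary_mult[OF elementary_const[of m D "-1"]] by simp

lemma elementary_diff: "elementary m D f \<Longrightarrow> elementary m D g \<Longrightarrow> elementary m D (\<lambda>x. f x - g x)"
  using elementary_add[OF _ elementary_minus] by simp

lemma elementary_divide: "elementary m D f \<Longrightarrow> elementary m D g \<Longrightarrow> (\<forall>x\<in>D. g x \<noteq> 0) \<Longrightarrow> elementary m D (\<lambda>x. f x / g x)"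
  using elementary_mult[OF _ elementary_inverse] by (simp add: divide_inverse)

lemma elementary_power2: "elementary m D f \<Longrightarrow> elementary m D (\<lambda>x. (f x)^2)"
  using elementary_mult by (simp add: power2_eq_square)

lemma elementary_sum: "finite A \<Longrightarrow> (\<forall>r\<in>A. elementary m D (f r)) \<Longrightarrow> elementary m D (\<lambda>x. \<Sum>r\<in>A. f r x)"
proof (induction A rule: finite_induct)
  case empty then show ?case using elementary_const[of m D 0] by simp
next
  case (insert a A) then show ?case using elementary_add[of m D "f a"] by simp
qed

lemma elementary_tendsto: "elementary m D f \<Longrightarrow> x \<in> D \<Longrightarrow> (f \<longlongrightarrow> f x) (coord_nhds m x D)"
  by (induction rule: elementary.induct) (auto intro!: tendsto_intros tendsto_coord_nhds)

lemma elementary_partial_deriv: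
  assumes "elementary m D f" "i < m"
  shows "\<exists>g. elementary m D g \<and> (\<forall>x\<in>D. ((\<lambda>s. f (x(i := x i + s))) has_real_derivative g x) (at 0))"
  using assms(1)
proof (induction rule: elementary.induct)
  case (elementary_const c) then show ?case by (intro exI[of _ "\<lambda>x. 0"]) (auto intro: elementary.elementary_const)
next
  case (elementary_coord j)
  show ?case
  proof (intro exI[of _ "\<lambda>x. if j = i then 1 else 0"] conjI ballI)
    show "elementary m D (\<lambda>x. if j = i then 1 else 0)" by (rule elementary.elementary_const)
    fix x
    show "((\<lambda>s. (x(i := x i + s)) j) has_real_derivative (if j = i then 1 else 0)) (at 0)"
      by (cases "j = i") (auto intro!: derivative_eq_intros)
  qed
next
  case (elementary_add f g)
  then obtain f' g' where f': "elementary m D f'" "\<forall>x\<in>D. ((\<lambda>s. f (x(i := x i + s))) has_real_derivative f' x) (at 0)"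
    and g': "elementary m D g'" "\<forall>x\<in>D. ((\<lambda>s. g (x(i := x i + s))) has_real_derivative g' x) (at 0)" by blast
  show ?case
    by (rule exI[of _ "\<lambda>x. f' x + g' x"]) (use f' g' in \<open>auto intro!: elementary.elementary_add DERIV_add simp del: fun_upd_apply\<close>)
next
  case (elementary_mult f g)
  then obtain f' g' where f': "elementary m D f'" "\<forall>x\<in>D. ((\<lambda>s. f (x(i := x i + s))) has_real_derivative f' x) (at 0)"
    and g': "elementary m D g'" "\<forall>x\<in>D. ((\<lambda>s. g (x(i := x i + s))) has_real_derivative g' x) (at 0)" by blast
  show ?case
  proof (rule exI[of _ "\<lambda>x. f' x * g x + f x * g' x"], intro conjI ballI)
    show "elementary m D (\<lambda>x. f' x * g x + f x * g' x)"
      using f' g' elementary_mult.hyps by (auto intro!: elementary.elementary_add elementary.elementary_mult)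
    fix x assume "x \<in> D"
    then show "((\<lambda>s. f (x(i := x i + s)) * g (x(i := x i + s))) has_real_derivative f' x * g x + f x * g' x) (at 0)"
      using DERIV_mult[of "\<lambda>s. f (x(i := x i + s))" "f' x" 0 UNIV "\<lambda>s. g (x(i := x i + s))" "g' x"] f' g'
      by (simp add: mult.commute)
  qed
next
  case (elementary_exp f)
  then obtain f' where f': "elementary m D f'" "\<forall>x\<in>D. ((\<lambda>s. f (x(i := x i + s))) has_real_derivative f' x) (at 0)" by blast
  show ?case
  proof (rule exI[of _ "\<lambda>x. exp (f x) * f' x"], intro conjI ballI)
    show "elementary m D (\<lambda>x. exp (f x) * f' x)" using f' elementary_exp.hyps by (auto intro!: elementary.elementary_mult elementary.elementary_exp)
    fix x assume "x \<in> D"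
    then show "((\<lambda>s. exp (f (x(i := x i + s)))) has_real_derivative exp (f x) * f' x) (at 0)"
      using f' by (auto intro!: derivative_eq_intros)
  qed
next
  case (elementary_inverse f)
  then obtain f' where f': "elementary m D f'" "\<forall>x\<in>D. ((\<lambda>s. f (x(i := x i + s))) has_real_derivative f' x) (at 0)" by blast
  show ?case
  proof (rule exI[of _ "\<lambda>x. - (f' x * (inverse (f x) * inverse (f x)))"], intro conjI ballI)
    show "elementary m D (\<lambda>x. - (f' x * (inverse (f x) * inverse (f x))))"
      using f' elementary_inverse.hyps by (auto intro!: elementary_minus elementary.elementary_mult elementary.elementary_inverse)
    fix x assume x: "x \<in> D"
    then show "((\<lambda>s. inverse (f (x(i := x i + s)))) has_real_derivative - (f' x * (inverse (f x) * inverse (f x)))) (at 0)"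
      using DERIV_inverse_fun[of "\<lambda>s. f (x(i := x i + s))" "f' x" 0 UNIV] f' elementary_inverse.hyps
      by (simp add: power2_eq_square)
  qed
qed

definition coord_open :: "(nat \<Rightarrow> real) set \<Rightarrow> bool" where
  "coord_open D \<longleftrightarrow> (\<forall>x\<in>D. \<forall>i. \<exists>e>0. \<forall>s. \<bar>s\<bar> < e \<longrightarrow> x(i := x i + s) \<in> D)"

lemma pdiff_transfer:
  assumes FD: "\<forall>x\<in>D. F x = g x" and D: "coord_open D" and x: "x \<in> D"
    and d: "((\<lambda>s. g (x(i := x i + s))) has_real_derivative d) (at 0)"
  shows "((\<lambda>s. F (x(i := x i + s))) has_real_derivative d) (at 0)" "pdiff i F x = d"
proof -
  obtain e where e: "e > 0" "\<forall>s. \<bar>s\<bar> < e \<longrightarrow> x(i := x i + s) \<in> D" using D x unfolding coord_open_def by blast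
  have ev: "eventually (\<lambda>s. F (x(i := x i + s)) = g (x(i := x i + s))) (nhds 0)"
    unfolding eventually_nhds_metric dist_real_def using e FD by (intro exI[of _ e]) auto
  show F_deriv: "((\<lambda>s. F (x(i := x i + s))) has_real_derivative d) (at 0)"
    using DERIV_cong_ev[OF refl ev refl] d by simp
  show "pdiff i F x = d" unfolding pdiff_def using DERIV_imp_deriv[OF F_deriv] .
qed

lemma elementary_iterated_pdiff:
  assumes "elementary m D f" "coord_open D" "set ds \<subseteq> {..<m}"
  shows "\<exists>g. elementary m D g \<and> (\<forall>x\<in>D. foldr pdiff ds f x = g x)"
  using assms(3)
proof (induction ds)
  case Nil then show ?case using assms(1) by auto
next
  case (Cons d ds)
  then obtain g where g: "elementary m D g" "\<forall>x\<in>D. foldr pdiff ds f x = g x" by auto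
  have "d < m" using Cons.prems by auto
  then obtain g' where g': "elementary m D g'" "\<forall>x\<in>D. ((\<lambda>s. g (x(i := x i + s))) has_real_derivative g' x) (at 0)"
    if "i = d" for i
    using elementary_partial_deriv[OF g(1)] by blast
  show ?case
  proof (intro exI[of _ g'] conjI ballI)
    show "elementary m D g'" using g' by blast
    fix x assume x: "x \<in> D"
    show "foldr pdiff (d # ds) f x = g' x"
      using pdiff_transfer(2)[OF g(2) assms(2) x, of d "g' x"] g' x by simp
  qed
qed

lemma elementary_smooth_fn:
  assumes "elementary m D f" "coord_open D"
  shows "smooth_fn m D f"
  unfolding smooth_fn_def
proof (intro allI impI conjI ballI)
  fix ds assume ds: "set ds \<subseteq> {..<m}"
  obtain g where g: "elementary m D g" "\<forall>x\<in>D. foldr pdiff ds f x = g x" using elementary_iterated_pdiff[OF assms ds] by blast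
  fix x assume x: "x \<in> D"
  have "tends_within m g (g x) x D" by (rule tends_within_coord_nhds, rule elementary_tendsto[OF g(1) x])
  then show "tends_within m (foldr pdiff ds f) (foldr pdiff ds f x) x D"
    using g(2) x unfolding tends_within_def by auto
next
  fix ds x i assume ds: "set ds \<subseteq> {..<m}" and x: "x \<in> D" and i: "i < m"
  obtain g where g: "elementary m D g" "\<forall>x\<in>D. foldr pdiff ds f x = g x" using elementary_iterated_pdiff[OF assms ds] by blast
  obtain g' where g': "elementary m D g'" "\<forall>x\<in>D. ((\<lambda>s. g (x(i := x i + s))) has_real_derivative g' x) (at 0)"
    using elementary_partial_deriv[OF g(1) i] by blast
  show "((\<lambda>s. foldr pdiff ds f (x(i := x i + s))) has_real_derivative pdiff i (foldr pdiff ds f) x) (at 0)"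
    using pdiff_transfer[OF g(2) assms(2) x, of i "g' x"] g' x by simp
qed

lemma coord_open_chamber: "coord_open (chamber m)"
  unfolding coord_open_def
proof (intro ballI allI)
  fix x i assume x: "x \<in> chamber m"
  define G where "G = (\<lambda>(a,b). x a - x b) ` {(a,b). a < b \<and> b < m}"
  have fin: "finite G" unfolding G_def
    by (rule finite_imageI, rule finite_subset[of _ "{..<m} \<times> {..<m}"]) auto
  define e where "e = Min (insert 1 G)"
  have epos: "e > 0" unfolding e_def using fin
    by (subst Min_gr_iff) (auto simp: G_def dest: chamberD[OF x])
  have ele: "e \<le> x a - x b" if "a < b" "b < m" for a b
    unfolding e_def using fin that by (intro Min_le) (auto simp: G_def)
  show "\<exists>e>0. \<forall>s. \<bar>s\<bar> < e \<longrightarrow> x(i := x i + s) \<in> chamber m"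
  proof (intro exI[of _ e] conjI allI impI)
    fix s :: real assume s: "\<bar>s\<bar> < e"
    show "x(i := x i + s) \<in> chamber m" unfolding chamber_def
    proof (intro CollectI allI impI)
      fix a b assume ab: "a < b" "b < m"
      then show "(x(i := x i + s)) b < (x(i := x i + s)) a"
        using ele[OF ab] s chamberD[OF x ab] by auto
    qed
  qed (rule epos)
qed

lemma eventually_upd_in_chamber:
  assumes y: "y \<in> chamber n"
  shows "eventually (\<lambda>s. y(i := y i + s) \<in> chamber n) (nhds 0)"
proof -
  obtain e where e: "e > 0" "\<forall>s. \<bar>s\<bar> < e \<longrightarrow> y(i := y i + s) \<in> chamber n"
    using coord_open_chamber y unfolding coord_open_def by blast
  show ?thesis unfolding eventually_nhds_metric dist_real_def using e by (intro exI[of _ e]) auto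
qed

lemma elementary_gap_form: "Suc r < m \<Longrightarrow> elementary m D (\<lambda>y. gap_form y r u)"
  unfolding gap_form_def gap_exp_def
  by (intro elementary_diff elementary_mult elementary_exp elementary_const elementary_coord) auto

lemma elementary_gmat_expl: "elementary m (chamber m) (\<lambda>y. gmat_expl m y a b)"
proof (cases "a < m \<and> b < m")
  case True
  have "elementary m (chamber m) (\<lambda>y. basis_vec a 0 * basis_vec b 0 + (\<Sum>r<m-1. gap_form y r (basis_vec a) * gap_form y r (basis_vec b) / (1 - (gap_exp y r)^2)))"
  proof (intro elementary_add elementary_const elementary_sum ballI)
    fix r assume r: "r \<in> {..<m-1}"
    then have r1: "Suc r < m" by auto
    have d: "elementary m (chamber m) (\<lambda>y. 1 - (gap_exp y r)^2)" using r1 unfolding gap_exp_def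
      by (intro elementary_diff elementary_const elementary_power2 elementary_exp elementary_coord) auto
    have nz: "\<forall>y\<in>chamber m. 1 - (gap_exp y r)^2 \<noteq> 0" using one_minus_gap_exp_sq_pos r1 by fastforce
    show "elementary m (chamber m) (\<lambda>y. gap_form y r (basis_vec a) * gap_form y r (basis_vec b) / (1 - (gap_exp y r)^2))"
      by (rule elementary_divide[OF elementary_mult[OF elementary_gap_form[OF r1] elementary_gap_form[OF r1]] d nz])
  qed simp
  then show ?thesis using True by (simp add: gmat_expl_def gform_def)
next
  case False
  then have "(\<lambda>y. gmat_expl m y a b) = (\<lambda>y. 0)" by (auto simp: gmat_expl_def)
  then show ?thesis by (simp add: elementary_const)
qed

lemma riemannian_gmat_expl:
  assumes m: "0 < m"
  shows "riemannian m (chamber m) (gmat_expl m)"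
  unfolding riemannian_def
proof (intro conjI allI impI ballI)
  fix a b assume "a < m" "b < m"
  show "smooth_fn m (chamber m) (\<lambda>x. gmat_expl m x a b)" by (rule elementary_smooth_fn[OF elementary_gmat_expl coord_open_chamber])
next
  fix x a b show "gmat_expl m x a b = gmat_expl m x b a" by (rule gmat_expl_sym)
next
  fix x and u :: "nat \<Rightarrow> real" assume x: "x \<in> chamber m" and u: "\<exists>i<m. u i \<noteq> 0"
  show "0 < bilin m (gmat_expl m x) u u" using gform_pos[OF x m u] bilin_gmat_expl[OF m] by simp
qed

section \<open>Restriction to the collision set\<close>

definition gform_term :: "(nat \<Rightarrow> real) \<Rightarrow> (nat \<Rightarrow> real) \<Rightarrow> (nat \<Rightarrow> real) \<Rightarrow> nat \<Rightarrow> real" where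
  "gform_term y U W r = gap_form y r U * gap_form y r W / (1 - (gap_exp y r)^2)"

definition gform_omit :: "nat \<Rightarrow> nat \<Rightarrow> (nat \<Rightarrow> real) \<Rightarrow> (nat \<Rightarrow> real) \<Rightarrow> (nat \<Rightarrow> real) \<Rightarrow> real" where
  "gform_omit n k y U W = U 0 * W 0 + (\<Sum>r<k. gform_term y U W r) + (\<Sum>r\<in>{Suc k..<n-1}. gform_term y U W r)"

lemma gform_split:
  assumes "Suc k < n"
  shows "gform n y U W = gform_omit n k y U W + gform_term y U W k"
proof -
  have "(\<Sum>r\<in>{0..<Suc k}. gform_term y U W r) + (\<Sum>r\<in>{Suc k..<n-1}. gform_term y U W r) = (\<Sum>r\<in>{0..<n-1}. gform_term y U W r)"
    by (rule sum.atLeastLessThan_concat) (use assms in auto)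
  then have "(\<Sum>r<n-1. gform_term y U W r) = (\<Sum>r\<in>{0..<Suc k}. gform_term y U W r) + (\<Sum>r\<in>{Suc k..<n-1}. gform_term y U W r)"
    by (simp add: atLeast0LessThan)
  also have "(\<Sum>r\<in>{0..<Suc k}. gform_term y U W r) = (\<Sum>r<k. gform_term y U W r) + gform_term y U W k"
    by (simp add: atLeast0LessThan)
  finally show ?thesis by (simp add: gform_def gform_omit_def gform_term_def[symmetric])
qed

lemma gap_form_dup_lo: "r < k \<Longrightarrow> gap_form (dup k x) r (dup k u) = gap_form x r u"
  by (simp add: gap_form_def gap_exp_def dup_def)

lemma gap_exp_dup_lo: "r < k \<Longrightarrow> gap_exp (dup k x) r = gap_exp x r"
  by (simp add: gap_exp_def dup_def)

lemma gap_form_dup_hi: "k \<le> r \<Longrightarrow> gap_form (dup k x) (Suc r) (dup k u) = gap_form x r u"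
  by (simp add: gap_form_def gap_exp_def dup_def)

lemma gap_exp_dup_hi: "k \<le> r \<Longrightarrow> gap_exp (dup k x) (Suc r) = gap_exp x r"
  by (simp add: gap_exp_def dup_def)

lemma gform_omit_dup:
  assumes "Suc k < n"
  shows "gform_omit n k (dup k x) (dup k u) (dup k w) = gform (n-1) x u w"
proof -
  obtain n' where n': "n = Suc (Suc n')" using assms by (cases n; cases "n - 1") auto
  have kn: "k \<le> n'" using assms n' by simp
  have "(\<Sum>r\<in>{0..<k}. gform_term x u w r) + (\<Sum>r\<in>{k..<n'}. gform_term x u w r) = (\<Sum>r\<in>{0..<n'}. gform_term x u w r)"
    by (rule sum.atLeastLessThan_concat) (use kn in auto)
  then have "(\<Sum>r<n-1-1. gform_term x u w r) = (\<Sum>r\<in>{0..<k}. gform_term x u w r) + (\<Sum>r\<in>{k..<n'}. gform_term x u w r)"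
    using n' by (simp add: atLeast0LessThan)
  moreover have "(\<Sum>r<k. gform_term (dup k x) (dup k u) (dup k w) r) = (\<Sum>r\<in>{0..<k}. gform_term x u w r)"
    by (auto simp: atLeast0LessThan gform_term_def gap_form_dup_lo gap_exp_dup_lo intro: sum.cong)
  moreover have "(\<Sum>r\<in>{Suc k..<n-1}. gform_term (dup k x) (dup k u) (dup k w) r) = (\<Sum>r\<in>{k..<n'}. gform_term x u w r)"
  proof -
    have "{Suc k..<n-1} = {Suc k..<Suc n'}" using n' by simp
    then have "(\<Sum>r\<in>{Suc k..<n-1}. gform_term (dup k x) (dup k u) (dup k w) r) = (\<Sum>r\<in>{k..<n'}. gform_term (dup k x) (dup k u) (dup k w) (Suc r))"
      by (simp only: sum.shift_bounds_Suc_ivl)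
    also have "\<dots> = (\<Sum>r\<in>{k..<n'}. gform_term x u w r)"
      by (rule sum.cong) (auto simp: gform_term_def gap_form_dup_hi gap_exp_dup_hi)
    finally show ?thesis .
  qed
  moreover have "dup k u 0 = u 0" "dup k w 0 = w 0" by (auto simp: dup_def)
  ultimately show ?thesis by (simp add: gform_omit_def gform_def gform_term_def)
qed

lemma one_minus_gap_exp_sq_nonzero: "y r \<noteq> y (Suc r) \<Longrightarrow> 1 - (gap_exp y r)^2 \<noteq> 0"
proof
  assume a: "y r \<noteq> y (Suc r)" "1 - (gap_exp y r)^2 = 0"
  then have "exp (2 * (y (Suc r) - y r)) = 1" by (simp add: gap_exp_def power2_eq_square flip: exp_add)
  then show False using a(1) by simp
qed

lemma gform_omit_tendsto:
  assumes Y: "\<forall>i<n. ((\<lambda>t. Y t i) \<longlongrightarrow> y0 i) F"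
    and U: "\<forall>i<n. ((\<lambda>t. U t i) \<longlongrightarrow> U0 i) F"
    and W: "\<forall>i<n. ((\<lambda>t. W t i) \<longlongrightarrow> W0 i) F"
    and n: "0 < n" and kn: "Suc k < n" and d: "\<forall>r. Suc r < n \<longrightarrow> r \<noteq> k \<longrightarrow> y0 r \<noteq> y0 (Suc r)"
  shows "((\<lambda>t. gform_omit n k (Y t) (U t) (W t)) \<longlongrightarrow> gform_omit n k y0 U0 W0) F"
proof -
  have T: "((\<lambda>t. gform_term (Y t) (U t) (W t) r) \<longlongrightarrow> gform_term y0 U0 W0 r) F" if "Suc r < n" "r \<noteq> k" for r
  proof -
    have "1 - (gap_exp y0 r)^2 \<noteq> 0" using d that one_minus_gap_exp_sq_nonzero by blast
    then show ?thesis unfolding gform_term_def gap_form_def gap_exp_def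
      using that Y U W by (intro tendsto_intros) auto
  qed
  show ?thesis unfolding gform_omit_def using T n U W kn
    by (intro tendsto_intros) auto
qed

lemma dup_dropc: "U k = U (Suc k) \<Longrightarrow> dup k (dropc k U) = U"
proof (rule ext)
  fix i assume "U k = U (Suc k)"
  then show "dup k (dropc k U) i = U i"
    by (cases "i \<le> k"; cases "i = Suc k") (auto simp: dup_def dropc_def)
qed

lemma dup_chamber_adjacent_distinct:
  assumes kn: "Suc k < n" and x: "x \<in> chamber (n - 1)" and r: "Suc r < n" "r \<noteq> k"
  shows "dup k x r \<noteq> dup k x (Suc r)"
proof (cases "r < k")
  case True
  then have "Suc r < n - 1" using kn by linarith
  then show ?thesis using chamberD[OF x, of r "Suc r"] True by (auto simp: dup_def)
next
  case False
  then have "k < r" "r < n - 1" using r by auto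
  then show ?thesis using chamberD[OF x, of "r - 1" r] by (auto simp: dup_def)
qed

lemma gform_term_dup:
  assumes y: "y \<in> chamber n" and kn: "Suc k < n"
  shows "gform_term y (dup k u) (dup k w) k = u k * w k * ((1 - gap_exp y k) / (1 + gap_exp y k))"
proof -
  let ?e = "gap_exp y k"
  have e: "?e < 1" "0 < ?e" using gap_exp_less_1[OF y kn] gap_exp_pos by auto
  have "gform_term y (dup k u) (dup k w) k = u k * w k * ((1 - ?e)^2 / (1 - ?e^2))"
    by (simp add: gform_term_def gap_form_def dup_def algebra_simps power2_eq_square)
  also have "(1 - ?e)^2 / (1 - ?e^2) = ((1 - ?e) * (1 - ?e)) / ((1 - ?e) * (1 + ?e))"
    by (simp add: power2_eq_square algebra_simps)
  also have "\<dots> = (1 - ?e) / (1 + ?e)"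
    using e by (subst mult_divide_mult_cancel_left) auto
  finally show ?thesis .
qed

lemma gmat_restriction_tends:
  assumes kn: "Suc k < n" and x: "x \<in> chamber (n - 1)"
  shows "tends_within n (\<lambda>y. bilin n (gmat n y) (dup k u) (dup k w))
                    (bilin (n - 1) (gmat_expl (n - 1) x) u w) (dup k x) (chamber n)"
proof (rule tends_within_coord_nhds)
  let ?F = "coord_nhds n (dup k x) (chamber n)"
  have n1: "0 < n - 1" using kn by simp
  have ev: "eventually (\<lambda>y. bilin n (gmat n y) (dup k u) (dup k w) =
      gform_omit n k y (dup k u) (dup k w) + u k * w k * ((1 - gap_exp y k) / (1 + gap_exp y k))) ?F"
    using eventually_coord_nhds_in
    by (rule eventually_mono) (use kn in \<open>simp add: bilin_gmat gform_split gform_term_dup\<close>)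
  have coords: "\<forall>i<n. ((\<lambda>y. y i) \<longlongrightarrow> dup k x i) ?F"
    using tendsto_coord_nhds by blast
  have omit: "((\<lambda>y. gform_omit n k y (dup k u) (dup k w)) \<longlongrightarrow> gform (n - 1) x u w) ?F"
    using gform_omit_tendsto[of n "\<lambda>y. y" "dup k x" ?F "\<lambda>_. dup k u" "dup k u" "\<lambda>_. dup k w" "dup k w" k]
      coords kn dup_chamber_adjacent_distinct[OF kn x] gform_omit_dup[OF kn]
    by auto
  have "((\<lambda>y. gap_exp y k) \<longlongrightarrow> gap_exp (dup k x) k) ?F"
    unfolding gap_exp_def using coords kn by (intro tendsto_intros) auto
  moreover have "gap_exp (dup k x) k = 1"
    by (simp add: gap_exp_def dup_def)
  ultimately have "((\<lambda>y. u k * w k * ((1 - gap_exp y k) / (1 + gap_exp y k)))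
      \<longlongrightarrow> u k * w k * ((1 - 1) / (1 + 1))) ?F"
    by (intro tendsto_intros) auto
  then have collision: "((\<lambda>y. u k * w k * ((1 - gap_exp y k) / (1 + gap_exp y k))) \<longlongrightarrow> 0) ?F"
    by simp
  show "((\<lambda>y. bilin n (gmat n y) (dup k u) (dup k w)) \<longlongrightarrow> bilin (n - 1) (gmat_expl (n - 1) x) u w) ?F"
    using tendsto_cong[OF ev] tendsto_add[OF omit collision] bilin_gmat_expl[OF n1] by simp
qed

section \<open>The geodesic equation in Hamiltonian form\<close>

lemma gmat_expl_pdiff:
  assumes y: "y \<in> chamber n" and i: "i < n"
  shows "((\<lambda>s. gmat_expl n (y(i := y i + s)) a b) has_real_derivative deriv (\<lambda>s. gmat_expl n (y(i := y i + s)) a b) 0) (at 0)"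
    "pdiff i (\<lambda>z. gmat n z a b) y = deriv (\<lambda>s. gmat_expl n (y(i := y i + s)) a b) 0"
proof -
  obtain g where g: "elementary n (chamber n) g" "\<forall>x\<in>chamber n. ((\<lambda>s. gmat_expl n (x(i := x i + s)) a b) has_real_derivative g x) (at 0)"
    using elementary_partial_deriv[OF elementary_gmat_expl i] by blast
  have d: "((\<lambda>s. gmat_expl n (y(i := y i + s)) a b) has_real_derivative g y) (at 0)" using g y by blast
  then have "deriv (\<lambda>s. gmat_expl n (y(i := y i + s)) a b) 0 = g y" by (rule DERIV_imp_deriv)
  then show "((\<lambda>s. gmat_expl n (y(i := y i + s)) a b) has_real_derivative deriv (\<lambda>s. gmat_expl n (y(i := y i + s)) a b) 0) (at 0)"
    using d by simp
  have "\<forall>x\<in>chamber n. gmat n x a b = gmat_expl n x a b" using gmat_chamber by simp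
  from pdiff_transfer(2)[OF this coord_open_chamber y d] \<open>deriv _ 0 = g y\<close>
  show "pdiff i (\<lambda>z. gmat n z a b) y = deriv (\<lambda>s. gmat_expl n (y(i := y i + s)) a b) 0" by simp
qed

lemma fun_upd_add_basis_vec: "(y(i := y i + s)) b = y b + s * basis_vec i b"
  by (simp add: basis_vec_def)

definition hmat_pdiff :: "(nat \<Rightarrow> real) \<Rightarrow> nat \<Rightarrow> nat \<Rightarrow> nat \<Rightarrow> real" where
  "hmat_pdiff y i l b = hmat y l b * (ord_sign l b * (basis_vec i b - basis_vec i l))"

text \<open>Differentiating \<open>g h = 1\<close> gives \<open>\<partial>\<^sub>i g = - g (\<partial>\<^sub>i h) g\<close>, where \<open>\<partial>\<^sub>i h\<close>
  (\<open>hmat_pdiff\<close>) is supported on row and column \<open>i\<close>; contracted with \<open>q'\<close> this is the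
  Hamiltonian force \<open>p\<^sub>i \<Sum>\<^sub>c sgn (c - i) h\<^sub>i\<^sub>c p\<^sub>c\<close>.\<close>

lemma pdiff_gmat_expl_hmat:
  assumes y: "y \<in> chamber n" and i: "i < n" and a: "a < n" and b: "b < n"
  shows "(\<Sum>l<n. deriv (\<lambda>s. gmat_expl n (y(i := y i + s)) a l) 0 * hmat y l b + gmat_expl n y a l * hmat_pdiff y i l b) = 0"
proof -
  define phi where "phi s = (\<Sum>l<n. gmat_expl n (y(i := y i + s)) a l * exp (ord_sign l b * ((y b + s * basis_vec i b) - (y l + s * basis_vec i l))))" for s
  have ev: "eventually (\<lambda>s. phi s = (if a = b then 1 else 0)) (nhds 0)"
    using eventually_upd_in_chamber[OF y, of i]
  proof (rule eventually_mono)
    fix s assume ys: "y(i := y i + s) \<in> chamber n"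
    have "phi s = (\<Sum>l<n. gmat_expl n (y(i := y i + s)) a l * hmat (y(i := y i + s)) l b)"
      unfolding phi_def by (intro sum.cong refl) (simp add: hmat_chamber[OF ys _ b] fun_upd_add_basis_vec del: fun_upd_apply)
    then show "phi s = (if a = b then 1 else 0)" using gmat_expl_hmat[OF ys a b] by simp
  qed
  have d0: "(phi has_real_derivative 0) (at 0)"
    using DERIV_cong_ev[OF refl ev refl] by (simp add: DERIV_const)
  have d1: "(phi has_real_derivative (\<Sum>l<n. deriv (\<lambda>s. gmat_expl n (y(i := y i + s)) a l) 0 * hmat y l b + gmat_expl n y a l * hmat_pdiff y i l b)) (at 0)"
    unfolding phi_def
  proof (intro DERIV_sum)
    fix l assume l: "l \<in> {..<n}"
    have e: "((\<lambda>s. exp (ord_sign l b * ((y b + s * basis_vec i b) - (y l + s * basis_vec i l)))) has_real_derivative hmat_pdiff y i l b) (at 0)"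
      using hmat_chamber[OF y _ b, of l] l
      by (auto intro!: derivative_eq_intros simp: hmat_pdiff_def algebra_simps)
    have "gmat_expl n (y(i := y i + 0)) a l = gmat_expl n y a l" by simp
    moreover have "exp (ord_sign l b * ((y b + 0 * basis_vec i b) - (y l + 0 * basis_vec i l))) = hmat y l b"
      using hmat_chamber[OF y _ b, of l] l by simp
    ultimately show "((\<lambda>s. gmat_expl n (y(i := y i + s)) a l * exp (ord_sign l b * ((y b + s * basis_vec i b) - (y l + s * basis_vec i l))))
       has_real_derivative deriv (\<lambda>s. gmat_expl n (y(i := y i + s)) a l) 0 * hmat y l b + gmat_expl n y a l * hmat_pdiff y i l b) (at 0)"
      using DERIV_mult[OF gmat_expl_pdiff(1)[OF y i, of a l] e] by (simp add: mult.commute)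
  qed
  show ?thesis using DERIV_unique[OF d1 d0] .
qed

lemma pdiff_gmat_quadratic:
  fixes v :: "nat \<Rightarrow> real"
  assumes y: "y \<in> chamber n" and i: "i < n"
  defines "Gd \<equiv> \<lambda>a b. deriv (\<lambda>s. gmat_expl n (y(i := y i + s)) a b) 0"
  defines "P \<equiv> \<lambda>l. \<Sum>j<n. gmat_expl n y l j * v j"
  shows "(\<Sum>a<n. \<Sum>b<n. Gd a b * v a * v b) = - (\<Sum>b<n. \<Sum>c<n. P b * hmat_pdiff y i b c * P c)"
proof -
  have vb: "v b = (\<Sum>c<n. hmat y b c * P c)" if "b < n" for b
    using hmat_gmat_expl_apply[OF y that, of v] unfolding P_def by simp
  have id: "(\<Sum>b<n. Gd a b * hmat y b c) = - (\<Sum>b<n. gmat_expl n y a b * hmat_pdiff y i b c)" if "a < n" "c < n" for a c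
    using pdiff_gmat_expl_hmat[OF y i that] unfolding Gd_def by (simp add: sum.distrib eq_neg_iff_add_eq_0)
  have "(\<Sum>a<n. \<Sum>b<n. Gd a b * v a * v b) = (\<Sum>a<n. \<Sum>b<n. \<Sum>c<n. Gd a b * v a * (hmat y b c * P c))"
    by (intro sum.cong refl) (simp add: vb sum_distrib_left)
  also have "\<dots> = (\<Sum>a<n. \<Sum>c<n. \<Sum>b<n. Gd a b * v a * (hmat y b c * P c))"
    by (rule sum.cong[OF refl]) (rule sum.swap)
  also have "\<dots> = (\<Sum>a<n. \<Sum>c<n. (v a * P c) * (\<Sum>b<n. Gd a b * hmat y b c))"
    by (intro sum.cong refl) (simp add: sum_distrib_left mult_ac)
  also have "\<dots> = (\<Sum>a<n. \<Sum>c<n. (v a * P c) * (- (\<Sum>b<n. gmat_expl n y a b * hmat_pdiff y i b c)))"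
    by (intro sum.cong refl) (simp add: id)
  also have "\<dots> = - (\<Sum>a<n. \<Sum>c<n. \<Sum>b<n. v a * gmat_expl n y a b * hmat_pdiff y i b c * P c)"
    by (simp add: sum_negf sum_distrib_left mult_ac)
  also have "(\<Sum>a<n. \<Sum>c<n. \<Sum>b<n. v a * gmat_expl n y a b * hmat_pdiff y i b c * P c)
      = (\<Sum>b<n. \<Sum>c<n. \<Sum>a<n. v a * gmat_expl n y a b * hmat_pdiff y i b c * P c)"
  proof -
    have "(\<Sum>a<n. \<Sum>c<n. \<Sum>b<n. v a * gmat_expl n y a b * hmat_pdiff y i b c * P c)
        = (\<Sum>a<n. \<Sum>b<n. \<Sum>c<n. v a * gmat_expl n y a b * hmat_pdiff y i b c * P c)"
      by (rule sum.cong[OF refl]) (rule sum.swap)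
    also have "\<dots> = (\<Sum>b<n. \<Sum>a<n. \<Sum>c<n. v a * gmat_expl n y a b * hmat_pdiff y i b c * P c)" by (rule sum.swap)
    also have "\<dots> = (\<Sum>b<n. \<Sum>c<n. \<Sum>a<n. v a * gmat_expl n y a b * hmat_pdiff y i b c * P c)"
      by (rule sum.cong[OF refl]) (rule sum.swap)
    finally show ?thesis .
  qed
  also have "\<dots> = (\<Sum>b<n. \<Sum>c<n. P b * hmat_pdiff y i b c * P c)"
  proof (intro sum.cong refl)
    fix b c
    have "(\<Sum>a<n. gmat_expl n y b a * v a) * hmat_pdiff y i b c * P c = (\<Sum>a<n. gmat_expl n y b a * v a * hmat_pdiff y i b c * P c)"
      by (simp only: sum_distrib_right)
    also have "\<dots> = (\<Sum>a<n. v a * gmat_expl n y a b * hmat_pdiff y i b c * P c)"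
    proof (rule sum.cong[OF refl])
      fix a show "gmat_expl n y b a * v a * hmat_pdiff y i b c * P c = v a * gmat_expl n y a b * hmat_pdiff y i b c * P c"
        using gmat_expl_sym[of n y a b] by simp
    qed
    finally have "(\<Sum>a<n. v a * gmat_expl n y a b * hmat_pdiff y i b c * P c) = (\<Sum>a<n. gmat_expl n y b a * v a) * hmat_pdiff y i b c * P c" by simp
    then show "(\<Sum>a<n. v a * gmat_expl n y a b * hmat_pdiff y i b c * P c) = P b * hmat_pdiff y i b c * P c"
      unfolding P_def by simp
  qed
  finally show ?thesis .
qed

lemma hmat_pdiff_quadratic:
  assumes i: "i < n"
  shows "(\<Sum>b<n. \<Sum>c<n. P b * hmat_pdiff y i b c * P c) = - 2 * (P i * (\<Sum>c<n. ord_sign i c * hmat y i c * P c))"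
proof -
  have "(\<Sum>b<n. \<Sum>c<n. P b * hmat_pdiff y i b c * P c)
      = (\<Sum>b<n. \<Sum>c<n. (P b * hmat y b c * ord_sign b c * P c) * basis_vec i c - (P b * hmat y b c * ord_sign b c * P c) * basis_vec i b)"
    by (intro sum.cong refl) (simp add: hmat_pdiff_def right_diff_distrib left_diff_distrib mult_ac)
  also have "\<dots> = (\<Sum>b<n. \<Sum>c<n. (P b * hmat y b c * ord_sign b c * P c) * basis_vec i c) - (\<Sum>b<n. \<Sum>c<n. (P b * hmat y b c * ord_sign b c * P c) * basis_vec i b)"
    by (simp only: sum_subtractf)
  also have "(\<Sum>b<n. \<Sum>c<n. (P b * hmat y b c * ord_sign b c * P c) * basis_vec i c) = (\<Sum>b<n. P b * hmat y b i * ord_sign b i * P i)"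
    using i by (simp only: sum_basis_vec_right) simp
  also have "(\<Sum>b<n. \<Sum>c<n. (P b * hmat y b c * ord_sign b c * P c) * basis_vec i b) = (\<Sum>c<n. \<Sum>b<n. (P b * hmat y b c * ord_sign b c * P c) * basis_vec i b)"
    by (rule sum.swap)
  also have "\<dots> = (\<Sum>c<n. P i * hmat y i c * ord_sign i c * P c)"
    using i by (simp only: sum_basis_vec_right) simp
  also have "(\<Sum>b<n. P b * hmat y b i * ord_sign b i * P i) = - (\<Sum>c<n. P i * hmat y i c * ord_sign i c * P c)"
  proof -
    have "(\<Sum>b<n. P b * hmat y b i * ord_sign b i * P i) = (\<Sum>b<n. - (P i * hmat y i b * ord_sign i b * P b))"
    proof (rule sum.cong[OF refl])
      fix b show "P b * hmat y b i * ord_sign b i * P i = - (P i * hmat y i b * ord_sign i b * P b)"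
        using ord_sign_swap[of b i] hmat_sym[of y b i] by simp
    qed
    then show ?thesis by (simp add: sum_negf)
  qed
  finally have "(\<Sum>b<n. \<Sum>c<n. P b * hmat_pdiff y i b c * P c) = - (\<Sum>c<n. P i * hmat y i c * ord_sign i c * P c) - (\<Sum>c<n. P i * hmat y i c * ord_sign i c * P c)" .
  moreover have "(\<Sum>c<n. P i * hmat y i c * ord_sign i c * P c) = P i * (\<Sum>c<n. ord_sign i c * hmat y i c * P c)"
    by (simp only: sum_distrib_left) (simp only: mult_ac)
  ultimately show ?thesis by simp
qed

lemma geodesic_force_eq:
  assumes y: "y \<in> chamber n" and i: "i < n"
  shows "(1/2) * (\<Sum>a<n. \<Sum>b<n. pdiff i (\<lambda>z. gmat n z a b) y * v a * v b)
       = (\<Sum>j<n. gmat_expl n y i j * v j) * (\<Sum>c<n. ord_sign i c * hmat y i c * (\<Sum>j<n. gmat_expl n y c j * v j))"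
proof -
  have "(\<Sum>a<n. \<Sum>b<n. pdiff i (\<lambda>z. gmat n z a b) y * v a * v b)
      = (\<Sum>a<n. \<Sum>b<n. deriv (\<lambda>s. gmat_expl n (y(i := y i + s)) a b) 0 * v a * v b)"
    using gmat_expl_pdiff(2)[OF y i] by simp
  also have "\<dots> = - (\<Sum>b<n. \<Sum>c<n. (\<Sum>j<n. gmat_expl n y b j * v j) * hmat_pdiff y i b c * (\<Sum>j<n. gmat_expl n y c j * v j))"
    by (rule pdiff_gmat_quadratic[OF y i])
  also have "\<dots> = 2 * ((\<Sum>j<n. gmat_expl n y i j * v j) * (\<Sum>c<n. ord_sign i c * hmat y i c * (\<Sum>j<n. gmat_expl n y c j * v j)))"
    using hmat_pdiff_quadratic[OF i, of "\<lambda>l. \<Sum>j<n. gmat_expl n y l j * v j" y] by simp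
  finally show ?thesis by simp
qed

lemma hamiltonian_deriv_eq_0:
  fixes y :: "nat \<Rightarrow> real" and v P :: "nat \<Rightarrow> real"
  assumes y: "y \<in> chamber n"
    and vP: "\<And>i. i < n \<Longrightarrow> v i = (\<Sum>c<n. hmat y i c * P c)"
  defines "F \<equiv> \<lambda>i. P i * (\<Sum>c<n. ord_sign i c * hmat y i c * P c)"
  shows "(\<Sum>a<n. \<Sum>b<n. hmat y a b * (ord_sign a b * (v b - v a)) * P a * P b + hmat y a b * (F a * P b + P a * F b)) = 0"
proof -
  define S where "S = (\<Sum>a<n. \<Sum>b<n. hmat y a b * ord_sign a b * v a * P a * P b)"
  have v_term: "(\<Sum>a<n. \<Sum>b<n. hmat y a b * ord_sign a b * v b * P a * P b) = - S"
  proof -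
    have "(\<Sum>a<n. \<Sum>b<n. hmat y a b * ord_sign a b * v b * P a * P b) = (\<Sum>b<n. \<Sum>a<n. hmat y a b * ord_sign a b * v b * P a * P b)"
      by (rule sum.swap)
    also have "\<dots> = (\<Sum>b<n. \<Sum>a<n. - (hmat y b a * ord_sign b a * v b * P b * P a))"
    proof (intro sum.cong refl)
      fix a b show "hmat y a b * ord_sign a b * v b * P a * P b = - (hmat y b a * ord_sign b a * v b * P b * P a)"
        using ord_sign_swap[of a b] hmat_sym[of y a b] by simp
    qed
    finally show ?thesis by (simp add: S_def sum_negf)
  qed
  have force_left: "(\<Sum>a<n. \<Sum>b<n. hmat y a b * F a * P b) = S"
  proof -
    have "(\<Sum>a<n. \<Sum>b<n. hmat y a b * F a * P b) = (\<Sum>a<n. F a * v a)"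
    proof (rule sum.cong[OF refl])
      fix a assume "a \<in> {..<n}"
      then have "v a = (\<Sum>b<n. hmat y a b * P b)" using vP by simp
      then show "(\<Sum>b<n. hmat y a b * F a * P b) = F a * v a" by (simp add: sum_distrib_left mult_ac)
    qed
    also have "\<dots> = S" unfolding S_def F_def
      by (intro sum.cong refl) (simp add: sum_distrib_left mult_ac)
    finally show ?thesis .
  qed
  have force_right: "(\<Sum>a<n. \<Sum>b<n. hmat y a b * P a * F b) = S"
  proof -
    have "(\<Sum>a<n. \<Sum>b<n. hmat y a b * P a * F b) = (\<Sum>b<n. \<Sum>a<n. hmat y b a * F b * P a)"
      by (subst sum.swap) (intro sum.cong refl, simp add: hmat_sym mult_ac)
    then show ?thesis using force_left by simp
  qed
  have "(\<Sum>a<n. \<Sum>b<n. hmat y a b * (ord_sign a b * (v b - v a)) * P a * P b + hmat y a b * (F a * P b + P a * F b))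
     = (\<Sum>a<n. \<Sum>b<n. hmat y a b * ord_sign a b * v b * P a * P b) - (\<Sum>a<n. \<Sum>b<n. hmat y a b * ord_sign a b * v a * P a * P b)
       + (\<Sum>a<n. \<Sum>b<n. hmat y a b * F a * P b) + (\<Sum>a<n. \<Sum>b<n. hmat y a b * P a * F b)"
    by (simp add: sum.distrib sum_subtractf algebra_simps)
  then show ?thesis using v_term force_left force_right by (simp add: S_def)
qed

lemma sum_split_pair:
  assumes "Suc k < n"
  shows "(\<Sum>c<n. f c) = (\<Sum>c<k. f c) + f k + f (Suc k) + (\<Sum>c\<in>{Suc (Suc k)..<n}. f c)"
proof -
  have "(\<Sum>c\<in>{0..<Suc (Suc k)}. f c) + (\<Sum>c\<in>{Suc (Suc k)..<n}. f c) = (\<Sum>c\<in>{0..<n}. f c)"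
    by (rule sum.atLeastLessThan_concat) (use assms in auto)
  then show ?thesis by (simp add: atLeast0LessThan)
qed

lemma ord_sign_sum_below:
  assumes j: "j < n"
  shows "(\<Sum>c<n. ord_sign j c * X c) = (\<Sum>c<n. X c) - X j - 2 * (\<Sum>c<j. X c)"
proof -
  have "(\<Sum>c<n. ord_sign j c * X c) = (\<Sum>c<n. X c - (if c = j then X c else 0) - 2 * (if c < j then X c else 0))"
    by (intro sum.cong refl) (auto simp: ord_sign_def)
  also have "\<dots> = (\<Sum>c<n. X c) - X j - 2 * (\<Sum>c<n. (if c < j then X c else 0))"
    using j by (simp add: sum_subtractf sum_distrib_left)
  also have "(\<Sum>c<n. (if c < j then X c else 0)) = (\<Sum>c<j. X c)"
  proof -
    have "{c\<in>{..<n}. c < j} = {..<j}" using j by auto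
    then show ?thesis by (simp add: sum.inter_filter[symmetric])
  qed
  finally show ?thesis .
qed

lemma ord_sign_sum_above:
  assumes j: "j < n"
  shows "(\<Sum>c<n. ord_sign j c * X c) = - (\<Sum>c<n. X c) + X j + 2 * (\<Sum>c\<in>{Suc j..<n}. X c)"
proof -
  have "(\<Sum>c<n. ord_sign j c * X c) = (\<Sum>c<n. - X c + (if c = j then X c else 0) + 2 * (if j < c then X c else 0))"
    by (intro sum.cong refl) (auto simp: ord_sign_def)
  also have "\<dots> = (\<Sum>c<n. - X c) + (\<Sum>c<n. (if c = j then X c else 0)) + (\<Sum>c<n. 2 * (if j < c then X c else 0))"
    by (simp only: sum.distrib)
  also have "\<dots> = - (\<Sum>c<n. X c) + X j + 2 * (\<Sum>c<n. (if j < c then X c else 0))"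
    using j by (simp add: sum_negf sum_distrib_left)
  also have "(\<Sum>c<n. (if j < c then X c else 0)) = (\<Sum>c\<in>{Suc j..<n}. X c)"
  proof -
    have "{c\<in>{..<n}. j < c} = {Suc j..<n}" by auto
    then show ?thesis by (simp add: sum.inter_filter[symmetric])
  qed
  finally show ?thesis .
qed

lemma exp_abs_dist_lipschitz:
  fixes a x z :: real
  shows "\<bar>exp (- \<bar>a - x\<bar>) - exp (- \<bar>a - z\<bar>)\<bar> \<le> 1 - exp (- \<bar>x - z\<bar>)"
proof -
  have key: "exp (- \<bar>a - x\<bar>) - exp (- \<bar>a - z\<bar>) \<le> 1 - exp (- \<bar>x - z\<bar>)" for a x z :: real
  proof -
    have "exp (- \<bar>a - x\<bar>) * exp (- \<bar>x - z\<bar>) \<le> exp (- \<bar>a - z\<bar>)"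
      by (simp flip: exp_add)
    moreover have "exp (- \<bar>a - x\<bar>) \<le> 1" by simp
    moreover have "0 \<le> 1 - exp (- \<bar>x - z\<bar>)" by simp
    ultimately have "exp (- \<bar>a - x\<bar>) - exp (- \<bar>a - z\<bar>) \<le> exp (- \<bar>a - x\<bar>) * (1 - exp (- \<bar>x - z\<bar>))"
      by (simp add: algebra_simps)
    also have "\<dots> \<le> 1 * (1 - exp (- \<bar>x - z\<bar>))"
      by (intro mult_right_mono) simp_all
    finally show ?thesis by simp
  qed
  show ?thesis using key[of a x z] key[of a z x] by (simp add: abs_le_iff abs_minus_commute)
qed

lemma tendsto_at_left_bounded_deriv:
  fixes f f' :: "real \<Rightarrow> real"
  assumes ts: "0 < ts"
    and d: "\<forall>t\<in>{0..<ts}. (f has_real_derivative f' t) (at t within {0..<ts})"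
    and ev: "eventually (\<lambda>t. \<bar>f' t\<bar> \<le> M) (at_left ts)"
  shows "\<exists>L. (f \<longlongrightarrow> L) (at_left ts)"
proof -
  obtain b where b: "b < ts" "\<forall>t>b. t < ts \<longrightarrow> \<bar>f' t\<bar> \<le> M"
    using ev ts unfolding eventually_at_left[OF ts] by blast
  define t1 where "t1 = max 0 ((b + ts) / 2)"
  have h1: "b < (b + ts) / 2" "(b + ts) / 2 < ts" using b by auto
  have t1: "0 \<le> t1" "b < t1" "t1 < ts" unfolding t1_def
    using h1 ts by (simp_all add: less_max_iff_disj)
  let ?S = "{t1..<ts}"
  have dS: "\<And>z. z \<in> ?S \<Longrightarrow> (f has_real_derivative f' z) (at z within ?S)"
  proof -
    fix z assume z: "z \<in> ?S"
    then have "(f has_real_derivative f' z) (at z within {0..<ts})" using d t1 by auto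
    then show "(f has_real_derivative f' z) (at z within ?S)" by (rule DERIV_subset) (use t1 in auto)
  qed
  have bS: "\<And>z. z \<in> ?S \<Longrightarrow> norm (f' z) \<le> M" using b t1 by auto
  have lip: "\<bar>f x - f z\<bar> \<le> M * \<bar>x - z\<bar>" if "x \<in> ?S" "z \<in> ?S" for x z
    using field_differentiable_bound[of ?S f f' M x z] dS bS that by auto
  have M0: "0 \<le> M" using bS[of t1] t1 by auto
  have "lipschitz_on M ?S f"
    by (rule lipschitz_onI) (use lip M0 in \<open>auto simp: dist_real_def\<close>)
  then have uc: "uniformly_continuous_on ?S f"
    by (rule lipschitz_on_uniformly_continuous)
  have "ts \<in> closure ?S" using t1 by simp
  then obtain L where L: "(f \<longlongrightarrow> L) (at ts within ?S)"
    using uniformly_continuous_on_extension_at_closure[OF uc] by blast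
  have "at ts within {..<ts} = at ts within ?S"
    by (rule at_within_nhd[of _ "{t1<..}"]) (use t1 in auto)
  then show ?thesis using L by auto
qed

lemma abs_hmat_mult_le: "\<bar>x\<bar> \<le> M \<Longrightarrow> \<bar>hmat y a b * x\<bar> \<le> M"
  using mult_right_mono[OF hmat_le_1 abs_ge_zero, of y a b x] hmat_pos[of y a b]
  by (simp add: abs_mult)

lemma abs_le_sqrt: "x^2 \<le> y \<Longrightarrow> \<bar>x\<bar> \<le> sqrt y"
  using real_le_rsqrt[of "\<bar>x\<bar>" y] by simp

lemma eventually_le_abs_plus_1: "(f \<longlongrightarrow> (L::real)) F \<Longrightarrow> eventually (\<lambda>t. f t \<le> \<bar>L\<bar> + 1) F"
  by (drule tendstoD[of _ _ _ 1]) (auto elim!: eventually_mono simp: dist_real_def)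

lemma eventually_abs_le_sqrt:
  assumes "eventually (\<lambda>t. (f t)^2 \<le> g t) F" and "(g \<longlongrightarrow> L) F"
  shows "eventually (\<lambda>t. \<bar>f t\<bar> \<le> sqrt (\<bar>L\<bar> + 1)) F"
  using assms(1) eventually_le_abs_plus_1[OF assms(2)]
  by eventually_elim (meson abs_le_sqrt order_trans)

lemma gap_ratio_le_1:
  assumes "0 < (e::real)" "e < 1"
  shows "(1 - e)^2 / (1 - e^2) \<le> 1"
proof -
  have "0 < 1 - e^2" using assms by (simp add: power_less_one_iff)
  moreover have "(1 - e)^2 \<le> 1 - e^2" using assms by (simp add: power2_eq_square algebra_simps)
  ultimately show ?thesis by simp
qed

lemma gap_ratio_eq:
  assumes "0 < (e::real)" "e < 1"
  shows "(1 - e)^2 * ((1 + e)^2 / (1 - e^2)) = 1 - e^2"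
proof -
  have "0 < 1 - e^2" using assms by (simp add: power_less_one_iff)
  then have "1 - e^2 \<noteq> 0" by simp
  moreover have "(1 - e)^2 * (1 + e)^2 = (1 - e^2) * (1 - e^2)" by (simp add: power2_eq_square algebra_simps)
  ultimately show ?thesis by (simp add: field_simps)
qed

text \<open>In \<open>p\<^sub>k' + p\<^sub>k\<^sub>+\<^sub>1'\<close> the products \<open>p\<^sub>k p\<^sub>k\<^sub>+\<^sub>1\<close> cancel: the right-hand side
  involves \<open>P k\<close>, \<open>P (k+1)\<close> only through \<open>v\<close>.\<close>

lemma force_pair_sum_eq:
  fixes y v P :: "nat \<Rightarrow> real"
  assumes y: "y \<in> chamber n" and kn: "Suc k < n"
    and vP: "\<And>i. i < n \<Longrightarrow> v i = (\<Sum>c<n. hmat y i c * P c)"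
  defines "A \<equiv> (\<Sum>c<k. hmat y k c * P c)"
  defines "B \<equiv> (\<Sum>c\<in>{Suc (Suc k)..<n}. hmat y (Suc k) c * P c)"
  defines "e \<equiv> hmat y k (Suc k)"
  shows "P k * (\<Sum>c<n. ord_sign k c * hmat y k c * P c) + P (Suc k) * (\<Sum>c<n. ord_sign (Suc k) c * hmat y (Suc k) c * P c)
     = - A * (v k - A - e * B) + B * (v (Suc k) - e * A - B)"
proof -
  have k1: "k < n" using kn by simp
  have lo: "hmat y (Suc k) c = e * hmat y k c" if "c < k" for c
    using that kn by (simp add: e_def hmat_chamber_le[OF y] hmat_chamber_ge[OF y] flip: exp_add)
  have hi: "hmat y k c = e * hmat y (Suc k) c" if "c \<in> {Suc (Suc k)..<n}" for c
    using that by (simp add: e_def hmat_chamber_ge[OF y] flip: exp_add)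
  have eA: "(\<Sum>c<k. hmat y (Suc k) c * P c) = e * A"
    unfolding A_def sum_distrib_left by (intro sum.cong refl) (simp add: lo)
  have eB: "(\<Sum>c\<in>{Suc (Suc k)..<n}. hmat y k c * P c) = e * B"
    unfolding B_def sum_distrib_left by (intro sum.cong refl) (simp add: hi)
  have ek: "hmat y (Suc k) k = e" by (simp add: e_def hmat_sym)
  have Sk: "(\<Sum>c<n. ord_sign k c * hmat y k c * P c) = - A + e * P (Suc k) + e * B"
  proof -
    have below: "(\<Sum>c<k. ord_sign k c * hmat y k c * P c) = - A"
      unfolding A_def by (simp add: sum_negf[symmetric] ord_sign_def)
    have above: "(\<Sum>c\<in>{Suc (Suc k)..<n}. ord_sign k c * hmat y k c * P c) = e * B"
      using eB by (simp add: ord_sign_def)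
    show ?thesis using sum_split_pair[OF kn, of "\<lambda>c. ord_sign k c * hmat y k c * P c"] below above by (simp add: ord_sign_def e_def)
  qed
  have Sk1: "(\<Sum>c<n. ord_sign (Suc k) c * hmat y (Suc k) c * P c) = - (e * A) - e * P k + B"
  proof -
    have below: "(\<Sum>c<k. ord_sign (Suc k) c * hmat y (Suc k) c * P c) = - (e * A)"
    proof -
      have "(\<Sum>c<k. ord_sign (Suc k) c * hmat y (Suc k) c * P c) = (\<Sum>c<k. - (hmat y (Suc k) c * P c))"
        by (intro sum.cong refl) (simp add: ord_sign_def)
      then show ?thesis using eA by (simp add: sum_negf)
    qed
    have above: "(\<Sum>c\<in>{Suc (Suc k)..<n}. ord_sign (Suc k) c * hmat y (Suc k) c * P c) = B"
      unfolding B_def by (simp add: ord_sign_def)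
    show ?thesis using sum_split_pair[OF kn, of "\<lambda>c. ord_sign (Suc k) c * hmat y (Suc k) c * P c"] below above ek by (simp add: ord_sign_def)
  qed
  have vk: "v k = A + P k + e * P (Suc k) + e * B"
    using vP[OF k1] sum_split_pair[OF kn, of "\<lambda>c. hmat y k c * P c"] eB by (simp add: A_def e_def hmat_diag)
  have vk1: "v (Suc k) = e * A + e * P k + P (Suc k) + B"
    using vP[OF kn] sum_split_pair[OF kn, of "\<lambda>c. hmat y (Suc k) c * P c"] eA ek by (simp add: B_def hmat_diag)
  show ?thesis unfolding Sk Sk1 vk vk1 by (simp add: algebra_simps)
qed

section \<open>Geodesics running into a collision\<close>

locale collision_geodesic =
  fixes n k :: nat and ts :: real and q qd p :: "real \<Rightarrow> nat \<Rightarrow> real" and qs :: "nat \<Rightarrow> real"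
  assumes kn: "Suc k < n" and ts: "0 < ts" and geo: "geodesic n ts q qd p"
    and ord: "\<forall>t\<in>{0..<ts}. q t \<in> chamber n"
    and lim: "\<forall>i<n. ((\<lambda>t. q t i) \<longlongrightarrow> qs i) (at_left ts)"
    and sing: "qs k = qs (Suc k)"
    and dist: "\<forall>i<n. \<forall>j<n. i \<noteq> j \<and> \<not> ({i, j} = {k, Suc k}) \<longrightarrow> qs i \<noteq> qs j"
begin

abbreviation "I \<equiv> {0..<ts}"

lemma n_pos: "0 < n"
  using kn by simp

lemma q_chamber: "t \<in> I \<Longrightarrow> q t \<in> chamber n"
  using ord by blast

lemma position_deriv: "t \<in> I \<Longrightarrow> i < n \<Longrightarrow> ((\<lambda>s. q s i) has_real_derivative qd t i) (at t within I)"
  using geo unfolding geodesic_def by blast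

lemma momentum_eq: "t \<in> I \<Longrightarrow> i < n \<Longrightarrow> p t i = (\<Sum>j<n. gmat_expl n (q t) i j * qd t j)"
  using geo q_chamber unfolding geodesic_def by (simp add: gmat_chamber)

lemma velocity_eq: "t \<in> I \<Longrightarrow> i < n \<Longrightarrow> qd t i = (\<Sum>c<n. hmat (q t) i c * p t c)"
  using hmat_gmat_expl_apply[OF q_chamber, of t i "qd t"] momentum_eq by simp

definition force :: "real \<Rightarrow> nat \<Rightarrow> real" where
  "force t i = p t i * (\<Sum>c<n. ord_sign i c * hmat (q t) i c * p t c)"

lemma momentum_deriv: "t \<in> I \<Longrightarrow> i < n \<Longrightarrow> ((\<lambda>s. p s i) has_real_derivative force t i) (at t within I)"
proof -
  assume t: "t \<in> I" and i: "i < n"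
  have "((\<lambda>s. p s i) has_real_derivative
           ((1/2) * (\<Sum>a<n. \<Sum>b<n. pdiff i (\<lambda>y. gmat n y a b) (q t) * qd t a * qd t b))) (at t within I)"
    using geo t i unfolding geodesic_def by blast
  moreover have "(1/2) * (\<Sum>a<n. \<Sum>b<n. pdiff i (\<lambda>y. gmat n y a b) (q t) * qd t a * qd t b) = force t i"
  proof -
    have "(\<Sum>c<n. ord_sign i c * hmat (q t) i c * p t c)
        = (\<Sum>c<n. ord_sign i c * hmat (q t) i c * (\<Sum>j<n. gmat_expl n (q t) c j * qd t j))"
      by (intro sum.cong refl) (simp add: momentum_eq[OF t])
    then show ?thesis
      unfolding force_def using geodesic_force_eq[OF q_chamber[OF t] i, of "qd t"] momentum_eq[OF t i] by simp
  qed
  ultimately show ?thesis by simp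
qed

definition energy :: "real \<Rightarrow> real" where
  "energy t = gform n (q t) (qd t) (qd t)"

definition hamiltonian :: "real \<Rightarrow> real" where
  "hamiltonian s = (\<Sum>a<n. \<Sum>b<n. exp (ord_sign a b * (q s b - q s a)) * p s a * p s b)"

lemma energy_eq_hamiltonian: "t \<in> I \<Longrightarrow> energy t = hamiltonian t"
proof -
  assume t: "t \<in> I"
  have "energy t = (\<Sum>a<n. p t a * qd t a)"
    unfolding energy_def using gmat_expl_pairing[OF n_pos, of "q t" "qd t" "qd t"] momentum_eq[OF t] by simp
  also have "\<dots> = (\<Sum>a<n. \<Sum>b<n. hmat (q t) a b * p t a * p t b)"
    using velocity_eq[OF t] by (intro sum.cong refl) (simp add: sum_distrib_left mult_ac)
  also have "\<dots> = hamiltonian t"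
    unfolding hamiltonian_def by (intro sum.cong refl) (simp add: hmat_chamber[OF q_chamber[OF t]])
  finally show ?thesis .
qed

lemma hamiltonian_deriv: "t \<in> I \<Longrightarrow> (hamiltonian has_real_derivative 0) (at t within I)"
proof -
  assume t: "t \<in> I"
  let ?h = "\<lambda>a b. hmat (q t) a b"
  have term_deriv: "((\<lambda>s. exp (ord_sign a b * (q s b - q s a)) * p s a * p s b) has_real_derivative
      ?h a b * (ord_sign a b * (qd t b - qd t a)) * p t a * p t b + ?h a b * (force t a * p t b + p t a * force t b))
      (at t within I)" if ab: "a < n" "b < n" for a b
  proof -
    have exp_deriv: "((\<lambda>s. exp (ord_sign a b * (q s b - q s a))) has_real_derivative
        ?h a b * (ord_sign a b * (qd t b - qd t a))) (at t within I)"
      using position_deriv[OF t] ab hmat_chamber[OF q_chamber[OF t] ab] by (auto intro!: derivative_eq_intros)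
    show ?thesis
      using DERIV_mult[OF DERIV_mult[OF exp_deriv momentum_deriv[OF t ab(1)]] momentum_deriv[OF t ab(2)]]
        hmat_chamber[OF q_chamber[OF t] ab]
      by (simp add: algebra_simps)
  qed
  have "(hamiltonian has_real_derivative (\<Sum>a<n. \<Sum>b<n. ?h a b * (ord_sign a b * (qd t b - qd t a)) * p t a * p t b
      + ?h a b * (force t a * p t b + p t a * force t b))) (at t within I)"
    unfolding hamiltonian_def using term_deriv by (intro DERIV_sum) auto
  moreover have "(\<Sum>a<n. \<Sum>b<n. ?h a b * (ord_sign a b * (qd t b - qd t a)) * p t a * p t b
      + ?h a b * (force t a * p t b + p t a * force t b)) = 0"
    using hamiltonian_deriv_eq_0[OF q_chamber[OF t], of "qd t" "p t"] velocity_eq[OF t] unfolding force_def by simp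
  ultimately show ?thesis by simp
qed

definition energy0 :: real where
  "energy0 = energy 0"

lemma energy_const: "t \<in> I \<Longrightarrow> energy t = energy0"
proof -
  assume t: "t \<in> I"
  obtain c where c: "\<forall>x\<in>I. hamiltonian x = c"
    using has_field_derivative_zero_constant[of I hamiltonian] hamiltonian_deriv by (auto simp: convex_real_interval)
  have "0 \<in> I" using ts by simp
  then show ?thesis
    using c t energy_eq_hamiltonian[OF t] energy_eq_hamiltonian[of 0] unfolding energy0_def by simp
qed

lemma energy0_nonneg: "0 \<le> energy0"
proof -
  have "0 \<in> I" using ts by simp
  then show ?thesis unfolding energy0_def energy_def by (rule gform_nonneg[OF q_chamber n_pos])
qed

lemma momentum_pairing_sq_le: "t \<in> I \<Longrightarrow> (\<Sum>i<n. p t i * U i)^2 \<le> gform n (q t) U U * energy0"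
  using gmat_expl_pairing_Cauchy_Schwarz[OF q_chamber n_pos, of t "qd t" U] momentum_eq energy_const[unfolded energy_def]
  by simp

lemma velocity_sq_le: "t \<in> I \<Longrightarrow> i < n \<Longrightarrow> (qd t i)^2 \<le> energy0"
  using coord_sq_le_gform[OF q_chamber, of t i "qd t"] energy_const[unfolded energy_def] by simp

lemma eventually_in_I: "eventually (\<lambda>t. t \<in> I) (at_left ts)"
  using eventually_at_left_real[OF ts] by eventually_elim auto

lemma qs_adjacent_distinct: "Suc r < n \<Longrightarrow> r \<noteq> k \<Longrightarrow> qs r \<noteq> qs (Suc r)"
proof -
  assume r: "Suc r < n" "r \<noteq> k"
  have "{r, Suc r} \<noteq> {k, Suc k}"
  proof
    assume "{r, Suc r} = {k, Suc k}"
    then have "r \<in> {k, Suc k}" "Suc r \<in> {k, Suc k}" by auto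
    then show False using r by auto
  qed
  then show ?thesis using dist r by auto
qed

lemma gform_omit_lim: "((\<lambda>t. gform_omit n k (q t) U U) \<longlongrightarrow> gform_omit n k qs U U) (at_left ts)"
  using gform_omit_tendsto[of n q qs "at_left ts" "\<lambda>_. U" U "\<lambda>_. U" U k] lim n_pos kn qs_adjacent_distinct
  by auto

lemma gap_exp_lim: "((\<lambda>t. gap_exp (q t) k) \<longlongrightarrow> 1) (at_left ts)"
proof -
  have "((\<lambda>t. gap_exp (q t) k) \<longlongrightarrow> gap_exp qs k) (at_left ts)"
    unfolding gap_exp_def using lim kn by (intro tendsto_intros) auto
  then show ?thesis using sing by (simp add: gap_exp_def)
qed

definition pair_sum :: "nat \<Rightarrow> real" where
  "pair_sum = (\<lambda>i. basis_vec k i + basis_vec (Suc k) i)"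

definition pair_diff :: "nat \<Rightarrow> real" where
  "pair_diff = (\<lambda>i. basis_vec k i - basis_vec (Suc k) i)"

lemma sum_pair_sum: "(\<Sum>i<n. p t i * pair_sum i) = p t k + p t (Suc k)"
  using kn by (simp add: pair_sum_def distrib_left sum.distrib sum_basis_vec_right)

lemma sum_pair_diff: "(\<Sum>i<n. p t i * pair_diff i) = p t k - p t (Suc k)"
  using kn by (simp add: pair_diff_def right_diff_distrib sum_subtractf sum_basis_vec_right)

lemma momentum_other_sq_le:
  assumes t: "t \<in> I" and c: "c < n" "c \<noteq> k" "c \<noteq> Suc k"
  shows "(p t c)^2 \<le> energy0 * gform_omit n k (q t) (basis_vec c) (basis_vec c)"
proof -
  have "gap_form (q t) k (basis_vec c) = 0"
    using c by (simp add: gap_form_def basis_vec_def)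
  then have "gform n (q t) (basis_vec c) (basis_vec c) = gform_omit n k (q t) (basis_vec c) (basis_vec c)"
    using gform_split[OF kn] by (simp add: gform_term_def)
  moreover have "(\<Sum>i<n. p t i * basis_vec c i) = p t c"
    using c by (simp add: sum_basis_vec_right)
  ultimately show ?thesis
    using momentum_pairing_sq_le[OF t, of "basis_vec c"] by (simp add: mult.commute)
qed

lemma momentum_pair_sum_sq_le:
  assumes t: "t \<in> I"
  shows "(p t k + p t (Suc k))^2 \<le> energy0 * (gform_omit n k (q t) pair_sum pair_sum + 1)"
proof -
  let ?e = "gap_exp (q t) k"
  have e: "0 < ?e" "?e < 1" using gap_exp_pos gap_exp_less_1[OF q_chamber[OF t] kn] by auto
  have "gform_term (q t) pair_sum pair_sum k = (1 - ?e)^2 / (1 - ?e^2)"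
    by (simp add: gform_term_def gap_form_def pair_sum_def basis_vec_def power2_eq_square)
  also have "\<dots> \<le> 1" using gap_ratio_le_1[OF e] .
  finally have "gform n (q t) pair_sum pair_sum \<le> gform_omit n k (q t) pair_sum pair_sum + 1"
    using gform_split[OF kn] by simp
  then have "gform n (q t) pair_sum pair_sum * energy0 \<le> (gform_omit n k (q t) pair_sum pair_sum + 1) * energy0"
    using energy0_nonneg by (rule mult_right_mono)
  then show ?thesis using momentum_pairing_sq_le[OF t, of pair_sum] sum_pair_sum by (simp add: mult.commute)
qed

lemma momentum_pair_diff_sq_le:
  assumes t: "t \<in> I"
  shows "((1 - gap_exp (q t) k) * (p t k - p t (Suc k)))^2
    \<le> energy0 * ((1 - gap_exp (q t) k)^2 * gform_omit n k (q t) pair_diff pair_diff + (1 - (gap_exp (q t) k)^2))"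
proof -
  let ?e = "gap_exp (q t) k"
  have e: "0 < ?e" "?e < 1" using gap_exp_pos gap_exp_less_1[OF q_chamber[OF t] kn] by auto
  have "gform_term (q t) pair_diff pair_diff k = (1 + ?e)^2 / (1 - ?e^2)"
    by (simp add: gform_term_def gap_form_def pair_diff_def basis_vec_def power2_eq_square algebra_simps)
  then have "(1 - ?e)^2 * gform_term (q t) pair_diff pair_diff k = 1 - ?e^2"
    using gap_ratio_eq[OF e] by simp
  then have split: "(1 - ?e)^2 * gform n (q t) pair_diff pair_diff
      = (1 - ?e)^2 * gform_omit n k (q t) pair_diff pair_diff + (1 - ?e^2)"
    using gform_split[OF kn] by (simp add: algebra_simps)
  have "((1 - ?e) * (p t k - p t (Suc k)))^2 = (1 - ?e)^2 * (p t k - p t (Suc k))^2"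
    by (simp add: power_mult_distrib)
  also have "\<dots> \<le> (1 - ?e)^2 * (gform n (q t) pair_diff pair_diff * energy0)"
    using momentum_pairing_sq_le[OF t, of pair_diff] sum_pair_diff by (intro mult_left_mono) auto
  also have "\<dots> = energy0 * ((1 - ?e)^2 * gform_omit n k (q t) pair_diff pair_diff + (1 - ?e^2))"
    using split by (simp only: mult_ac)
  finally show ?thesis .
qed

lemma weighted_pair_diff_tendsto_0:
  "((\<lambda>t. (1 - gap_exp (q t) k) * (p t k - p t (Suc k))) \<longlongrightarrow> 0) (at_left ts)"
proof (rule Lim_null_comparison)
  let ?g = "\<lambda>t. sqrt (energy0 * ((1 - gap_exp (q t) k)^2 * gform_omit n k (q t) pair_diff pair_diff
      + (1 - (gap_exp (q t) k)^2)))"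
  show "eventually (\<lambda>t. norm ((1 - gap_exp (q t) k) * (p t k - p t (Suc k))) \<le> ?g t) (at_left ts)"
    using eventually_in_I by eventually_elim (use momentum_pair_diff_sq_le abs_le_sqrt in auto)
  have "(?g \<longlongrightarrow> sqrt (energy0 * ((1 - 1)^2 * gform_omit n k qs pair_diff pair_diff + (1 - 1^2)))) (at_left ts)"
    using gap_exp_lim gform_omit_lim by (intro tendsto_intros)
  then show "(?g \<longlongrightarrow> 0) (at_left ts)" by simp
qed

definition momenta_bounded :: "real \<Rightarrow> real \<Rightarrow> bool" where
  "momenta_bounded M t \<longleftrightarrow> t \<in> I \<and> (\<forall>c<n. c \<noteq> k \<and> c \<noteq> Suc k \<longrightarrow> \<bar>p t c\<bar> \<le> M) \<and>
     \<bar>p t k + p t (Suc k)\<bar> \<le> M \<and> (\<forall>i<n. \<bar>qd t i\<bar> \<le> M)"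

lemma momenta_bounded_nonneg: "momenta_bounded M t \<Longrightarrow> 0 \<le> M"
  using n_pos unfolding momenta_bounded_def by (meson abs_ge_zero order_trans)

lemma eventually_momenta_bounded: "\<exists>M. eventually (momenta_bounded M) (at_left ts)"
proof -
  define L where "L c = energy0 * gform_omit n k qs (basis_vec c) (basis_vec c)" for c
  define LP where "LP = energy0 * (gform_omit n k qs pair_sum pair_sum + 1)"
  define M where "M = sqrt energy0 + (\<Sum>c<n. sqrt (\<bar>L c\<bar> + 1)) + sqrt (\<bar>LP\<bar> + 1)"
  have other: "eventually (\<lambda>t. \<forall>c\<in>{c. c < n \<and> c \<noteq> k \<and> c \<noteq> Suc k}. \<bar>p t c\<bar> \<le> sqrt (\<bar>L c\<bar> + 1)) (at_left ts)"
  proof (rule eventually_ball_finite, simp, rule ballI)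
    fix c assume c: "c \<in> {c. c < n \<and> c \<noteq> k \<and> c \<noteq> Suc k}"
    have "eventually (\<lambda>t. (p t c)^2 \<le> energy0 * gform_omit n k (q t) (basis_vec c) (basis_vec c)) (at_left ts)"
      using eventually_in_I by eventually_elim (use c momentum_other_sq_le in auto)
    then show "eventually (\<lambda>t. \<bar>p t c\<bar> \<le> sqrt (\<bar>L c\<bar> + 1)) (at_left ts)"
      unfolding L_def by (rule eventually_abs_le_sqrt) (intro tendsto_mult_left gform_omit_lim)
  qed
  have pair: "eventually (\<lambda>t. \<bar>p t k + p t (Suc k)\<bar> \<le> sqrt (\<bar>LP\<bar> + 1)) (at_left ts)"
  proof (rule eventually_abs_le_sqrt)
    show "eventually (\<lambda>t. (p t k + p t (Suc k))^2 \<le> energy0 * (gform_omit n k (q t) pair_sum pair_sum + 1)) (at_left ts)"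
      using eventually_in_I by eventually_elim (rule momentum_pair_sum_sq_le)
    show "((\<lambda>t. energy0 * (gform_omit n k (q t) pair_sum pair_sum + 1)) \<longlongrightarrow> LP) (at_left ts)"
      unfolding LP_def by (intro tendsto_intros gform_omit_lim)
  qed
  have nonneg: "0 \<le> (\<Sum>c<n. sqrt (\<bar>L c\<bar> + 1))" "0 \<le> sqrt (\<bar>LP\<bar> + 1)" "0 \<le> sqrt energy0"
    using energy0_nonneg by (auto intro: sum_nonneg)
  have le_M: "sqrt energy0 \<le> M" "sqrt (\<bar>LP\<bar> + 1) \<le> M"
    unfolding M_def using nonneg by linarith+
  have le_M_other: "sqrt (\<bar>L c\<bar> + 1) \<le> M" if "c < n" for c
  proof -
    have "sqrt (\<bar>L c\<bar> + 1) \<le> (\<Sum>c<n. sqrt (\<bar>L c\<bar> + 1))"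
      by (rule member_le_sum) (use that in auto)
    then show ?thesis unfolding M_def using nonneg by linarith
  qed
  have "eventually (momenta_bounded M) (at_left ts)"
    using eventually_in_I other pair
  proof eventually_elim
    case (elim t)
    have "\<bar>qd t i\<bar> \<le> M" if "i < n" for i
      using abs_le_sqrt[OF velocity_sq_le[OF elim(1) that]] le_M(1) by linarith
    then show ?case
      using elim le_M(2) le_M_other unfolding momenta_bounded_def by (fastforce intro: order_trans)
  qed
  then show ?thesis ..
qed

lemma hmat_momentum_sum_bound:
  assumes bdd: "momenta_bounded M t" and A: "A \<subseteq> {..<n}" and Ak: "\<forall>c\<in>A. c \<noteq> k \<and> c \<noteq> Suc k"
  shows "\<bar>\<Sum>c\<in>A. hmat (q t) i c * p t c\<bar> \<le> real n * M"
proof -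
  have "\<bar>\<Sum>c\<in>A. hmat (q t) i c * p t c\<bar> \<le> (\<Sum>c\<in>A. \<bar>hmat (q t) i c * p t c\<bar>)"
    by (rule sum_abs)
  also have "\<dots> \<le> (\<Sum>c\<in>A. M)"
    using bdd A Ak unfolding momenta_bounded_def by (intro sum_mono abs_hmat_mult_le) auto
  also have "\<dots> \<le> real n * M"
    using card_mono[OF _ A] momenta_bounded_nonneg[OF bdd] by (simp add: mult_right_mono)
  finally show ?thesis .
qed

lemma force_other_bound:
  assumes bdd: "momenta_bounded M t" and j: "j < n" "j \<noteq> k" "j \<noteq> Suc k"
  shows "\<bar>force t j\<bar> \<le> M * (2 * M + 2 * (real n * M))"
proof -
  have t: "t \<in> I" and pj: "\<bar>p t j\<bar> \<le> M" and vj: "\<bar>qd t j\<bar> \<le> M"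
    using bdd j unfolding momenta_bounded_def by auto
  let ?X = "\<lambda>c. hmat (q t) j c * p t c"
  have row: "(\<Sum>c<n. ?X c) = qd t j" "?X j = p t j"
    using velocity_eq[OF t j(1)] by (simp_all add: hmat_diag)
  have sign_sum: "\<bar>\<Sum>c<n. ord_sign j c * ?X c\<bar> \<le> 2 * M + 2 * (real n * M)"
  proof (cases "j < k")
    case True
    have "\<bar>\<Sum>c<j. ?X c\<bar> \<le> real n * M"
      using True j by (intro hmat_momentum_sum_bound[OF bdd]) auto
    then show ?thesis unfolding ord_sign_sum_below[OF j(1)] row using pj vj by linarith
  next
    case False
    then have "\<bar>\<Sum>c\<in>{Suc j..<n}. ?X c\<bar> \<le> real n * M"
      using j by (intro hmat_momentum_sum_bound[OF bdd]) auto
    then show ?thesis unfolding ord_sign_sum_above[OF j(1)] row using pj vj by linarith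
  qed
  have "\<bar>force t j\<bar> = \<bar>p t j\<bar> * \<bar>\<Sum>c<n. ord_sign j c * ?X c\<bar>"
    unfolding force_def by (simp add: abs_mult mult.assoc)
  also have "\<dots> \<le> M * (2 * M + 2 * (real n * M))"
    using pj sign_sum by (intro mult_mono) auto
  finally show ?thesis .
qed

lemma force_pair_sum_bound:
  assumes bdd: "momenta_bounded M t"
  shows "\<bar>force t k + force t (Suc k)\<bar> \<le> 2 * ((real n * M) * (M + 2 * (real n * M)))"
proof -
  have t: "t \<in> I" and v: "\<bar>qd t k\<bar> \<le> M" "\<bar>qd t (Suc k)\<bar> \<le> M"
    using bdd kn unfolding momenta_bounded_def by auto
  define A where "A = (\<Sum>c<k. hmat (q t) k c * p t c)"
  define B where "B = (\<Sum>c\<in>{Suc (Suc k)..<n}. hmat (q t) (Suc k) c * p t c)"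
  define e where "e = hmat (q t) k (Suc k)"
  have eq: "force t k + force t (Suc k) = - A * (qd t k - A - e * B) + B * (qd t (Suc k) - e * A - B)"
    unfolding force_def A_def B_def e_def by (rule force_pair_sum_eq[OF q_chamber[OF t] kn velocity_eq[OF t]])
  have bA: "\<bar>A\<bar> \<le> real n * M" "\<bar>e * A\<bar> \<le> real n * M"
    unfolding A_def e_def using kn by (auto intro!: hmat_momentum_sum_bound[OF bdd] abs_hmat_mult_le)
  have bB: "\<bar>B\<bar> \<le> real n * M" "\<bar>e * B\<bar> \<le> real n * M"
    unfolding B_def e_def by (auto intro!: hmat_momentum_sum_bound[OF bdd] abs_hmat_mult_le)
  have "\<bar>qd t k - A - e * B\<bar> \<le> M + 2 * (real n * M)" "\<bar>qd t (Suc k) - e * A - B\<bar> \<le> M + 2 * (real n * M)"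
    using v bA bB by linarith+
  then have "\<bar>- A * (qd t k - A - e * B)\<bar> \<le> (real n * M) * (M + 2 * (real n * M))"
    "\<bar>B * (qd t (Suc k) - e * A - B)\<bar> \<le> (real n * M) * (M + 2 * (real n * M))"
    using bA bB by (simp_all add: abs_mult mult_mono)
  then show ?thesis unfolding eq by linarith
qed

lemma momentum_other_converges:
  assumes j: "j < n" "j \<noteq> k" "j \<noteq> Suc k"
  shows "\<exists>L. ((\<lambda>t. p t j) \<longlongrightarrow> L) (at_left ts)"
proof -
  obtain M where M: "eventually (momenta_bounded M) (at_left ts)"
    using eventually_momenta_bounded by blast
  show ?thesis
  proof (rule tendsto_at_left_bounded_deriv[OF ts])
    show "\<forall>t\<in>I. ((\<lambda>t. p t j) has_real_derivative force t j) (at t within I)"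
      using momentum_deriv j by blast
    show "eventually (\<lambda>t. \<bar>force t j\<bar> \<le> M * (2 * M + 2 * (real n * M))) (at_left ts)"
      using M by eventually_elim (rule force_other_bound[OF _ j])
  qed
qed

lemma momentum_pair_sum_converges: "\<exists>L. ((\<lambda>t. p t k + p t (Suc k)) \<longlongrightarrow> L) (at_left ts)"
proof -
  obtain M where M: "eventually (momenta_bounded M) (at_left ts)"
    using eventually_momenta_bounded by blast
  show ?thesis
  proof (rule tendsto_at_left_bounded_deriv[OF ts])
    show "\<forall>t\<in>I. ((\<lambda>t. p t k + p t (Suc k)) has_real_derivative force t k + force t (Suc k)) (at t within I)"
      using momentum_deriv kn by (auto intro: DERIV_add)
    show "eventually (\<lambda>t. \<bar>force t k + force t (Suc k)\<bar> \<le> 2 * ((real n * M) * (M + 2 * (real n * M)))) (at_left ts)"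
      using M by eventually_elim (rule force_pair_sum_bound)
  qed
qed

lemma hmat_tendsto: "i < n \<Longrightarrow> c < n \<Longrightarrow> ((\<lambda>t. hmat (q t) i c) \<longlongrightarrow> hmat qs i c) (at_left ts)"
  unfolding hmat_def using lim by (intro tendsto_intros) auto

lemma velocity_decomp:
  assumes t: "t \<in> I" and i: "i < n"
  shows "qd t i = (\<Sum>c<k. hmat (q t) i c * p t c) + (\<Sum>c\<in>{Suc (Suc k)..<n}. hmat (q t) i c * p t c)
     + ((hmat (q t) i k + hmat (q t) i (Suc k)) / 2) * (p t k + p t (Suc k))
     + ((hmat (q t) i k - hmat (q t) i (Suc k)) / 2) * (p t k - p t (Suc k))"
proof -
  have "hmat (q t) i k * p t k + hmat (q t) i (Suc k) * p t (Suc k) =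
     ((hmat (q t) i k + hmat (q t) i (Suc k)) / 2) * (p t k + p t (Suc k))
     + ((hmat (q t) i k - hmat (q t) i (Suc k)) / 2) * (p t k - p t (Suc k))"
    by (simp add: field_simps)
  then show ?thesis
    using velocity_eq[OF t i] sum_split_pair[OF kn, of "\<lambda>c. hmat (q t) i c * p t c"] by linarith
qed

text \<open>Since \<open>|h\<^sub>i\<^sub>k - h\<^sub>i\<^sub>,\<^sub>k\<^sub>+\<^sub>1| \<le> 1 - e\<^sub>k\<close>, the possibly divergent difference
  \<open>p\<^sub>k - p\<^sub>k\<^sub>+\<^sub>1\<close> enters the velocity only with a vanishing weight.\<close>

lemma velocity_pair_diff_term_tendsto_0:
  assumes i: "i < n"
  shows "((\<lambda>t. ((hmat (q t) i k - hmat (q t) i (Suc k)) / 2) * (p t k - p t (Suc k))) \<longlongrightarrow> 0) (at_left ts)"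
proof (rule Lim_null_comparison)
  let ?g = "\<lambda>t. \<bar>(1 - gap_exp (q t) k) * (p t k - p t (Suc k))\<bar>"
  show "(?g \<longlongrightarrow> 0) (at_left ts)"
    using tendsto_rabs_zero[OF weighted_pair_diff_tendsto_0] .
  show "eventually (\<lambda>t. norm (((hmat (q t) i k - hmat (q t) i (Suc k)) / 2) * (p t k - p t (Suc k))) \<le> ?g t)
      (at_left ts)"
    using eventually_in_I
  proof eventually_elim
    case (elim t)
    have y: "q t \<in> chamber n" using q_chamber[OF elim] .
    have "exp (- \<bar>q t k - q t (Suc k)\<bar>) = gap_exp (q t) k"
      using chamberD[OF y, of k "Suc k"] kn by (simp add: gap_exp_def)
    then have "\<bar>hmat (q t) i k - hmat (q t) i (Suc k)\<bar> \<le> 1 - gap_exp (q t) k"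
      using exp_abs_dist_lipschitz[of "q t i" "q t k" "q t (Suc k)"] by (simp add: hmat_def)
    then have "\<bar>(hmat (q t) i k - hmat (q t) i (Suc k)) / 2\<bar> \<le> \<bar>1 - gap_exp (q t) k\<bar>"
      using gap_exp_less_1[OF y kn] by simp
    then have "\<bar>(hmat (q t) i k - hmat (q t) i (Suc k)) / 2\<bar> * \<bar>p t k - p t (Suc k)\<bar>
        \<le> \<bar>1 - gap_exp (q t) k\<bar> * \<bar>p t k - p t (Suc k)\<bar>"
      by (rule mult_right_mono) simp
    then show ?case
      by (simp only: real_norm_def abs_mult)
  qed
qed

lemma velocity_converges: "\<exists>V. (\<forall>i<n. ((\<lambda>t. qd t i) \<longlongrightarrow> V i) (at_left ts)) \<and> V k = V (Suc k)"
proof -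
  obtain Lp where Lp: "\<forall>j. j < n \<and> j \<noteq> k \<and> j \<noteq> Suc k \<longrightarrow> ((\<lambda>t. p t j) \<longlongrightarrow> Lp j) (at_left ts)"
    using momentum_other_converges by metis
  obtain LP where LP: "((\<lambda>t. p t k + p t (Suc k)) \<longlongrightarrow> LP) (at_left ts)"
    using momentum_pair_sum_converges by blast
  define V where
    "V i = (\<Sum>c<k. hmat qs i c * Lp c) + (\<Sum>c\<in>{Suc (Suc k)..<n}. hmat qs i c * Lp c) + hmat qs i k * LP" for i
  have collided: "hmat qs i (Suc k) = hmat qs i k" "hmat qs k i = hmat qs (Suc k) i" for i
    by (simp_all add: hmat_def sing)
  have "((\<lambda>t. qd t i) \<longlongrightarrow> V i) (at_left ts)" if i: "i < n" for i
  proof -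
    have "((\<lambda>t. (\<Sum>c<k. hmat (q t) i c * p t c) + (\<Sum>c\<in>{Suc (Suc k)..<n}. hmat (q t) i c * p t c)
        + ((hmat (q t) i k + hmat (q t) i (Suc k)) / 2) * (p t k + p t (Suc k))
        + ((hmat (q t) i k - hmat (q t) i (Suc k)) / 2) * (p t k - p t (Suc k)))
      \<longlongrightarrow> (\<Sum>c<k. hmat qs i c * Lp c) + (\<Sum>c\<in>{Suc (Suc k)..<n}. hmat qs i c * Lp c)
        + ((hmat qs i k + hmat qs i (Suc k)) / 2) * LP + 0) (at_left ts)"
      (is "(?f \<longlongrightarrow> ?L) _")
      using i kn Lp LP by (intro tendsto_intros hmat_tendsto velocity_pair_diff_term_tendsto_0) auto
    moreover have "?L = V i"
      unfolding V_def collided by simp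
    moreover have "eventually (\<lambda>t. ?f t = qd t i) (at_left ts)"
      using eventually_in_I by eventually_elim (simp add: velocity_decomp[OF _ i])
    ultimately show ?thesis
      using tendsto_cong by fastforce
  qed
  moreover have "V k = V (Suc k)"
    unfolding V_def collided by simp
  ultimately show ?thesis by blast
qed

lemma restricted_energy_le:
  assumes V: "\<forall>i<n. ((\<lambda>t. qd t i) \<longlongrightarrow> V i) (at_left ts)" and Vk: "V k = V (Suc k)" and t: "t \<in> I"
  shows "gform (n - 1) (dropc k qs) (dropc k V) (dropc k V) \<le> gform n (q t) (qd t) (qd t)"
proof -
  have lim_omit: "((\<lambda>s. gform_omit n k (q s) (qd s) (qd s)) \<longlongrightarrow> gform_omit n k qs V V) (at_left ts)"
    using gform_omit_tendsto[of n q qs "at_left ts" qd V qd V k] lim V n_pos kn qs_adjacent_distinct by auto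
  have "eventually (\<lambda>s. gform_omit n k (q s) (qd s) (qd s) \<le> energy0) (at_left ts)"
    using eventually_in_I
  proof eventually_elim
    case (elim s)
    have "0 \<le> gform_term (q s) (qd s) (qd s) k"
      unfolding gform_term_def using one_minus_gap_exp_sq_pos[OF q_chamber[OF elim] kn]
      by (intro divide_nonneg_pos) auto
    then show ?case
      using gform_split[OF kn] energy_const[OF elim] by (simp add: energy_def)
  qed
  then have "gform_omit n k qs V V \<le> energy0"
    by (rule tendsto_upperbound[OF lim_omit]) simp
  moreover have "gform_omit n k qs V V = gform (n - 1) (dropc k qs) (dropc k V) (dropc k V)"
    using gform_omit_dup[OF kn, of "dropc k qs" "dropc k V" "dropc k V"] dup_dropc[OF sing] dup_dropc[OF Vk]
    by simp
  moreover have "gform n (q t) (qd t) (qd t) = energy0"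
    using energy_const[OF t] by (simp add: energy_def)
  ultimately show ?thesis by simp
qed

end

theorem lemma5:
  fixes n k :: nat and ts :: real
    and q qd p :: "real \<Rightarrow> nat \<Rightarrow> real" and qs :: "nat \<Rightarrow> real"
  assumes n2: "2 \<le> n"
    and k: "k + 1 < n"
    and ts: "0 < ts"
    and geo: "geodesic n ts q qd p"
    and ord: "\<forall>t\<in>{0..<ts}. q t \<in> chamber n"
    and lim: "\<forall>i<n. ((\<lambda>t. q t i) \<longlongrightarrow> qs i) (at_left ts)"
    and sing: "qs k = qs (k + 1)"
    and dist: "\<forall>i<n. \<forall>j<n. i \<noteq> j \<and> \<not> ({i, j} = {k, k + 1}) \<longrightarrow> qs i \<noteq> qs j"
  shows "(\<exists>L. ((\<lambda>t. p t k + p t (k + 1)) \<longlongrightarrow> L) (at_left ts)) \<and>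
         (\<forall>j<n. j \<noteq> k \<and> j \<noteq> k + 1 \<longrightarrow> (\<exists>L. ((\<lambda>t. p t j) \<longlongrightarrow> L) (at_left ts))) \<and>
         (\<exists>V. (\<forall>i<n. ((\<lambda>t. qd t i) \<longlongrightarrow> V i) (at_left ts)) \<and> V k = V (k + 1) \<and>
            (\<exists>Gt. riemannian (n - 1) (chamber (n - 1)) Gt \<and>
               (\<forall>x\<in>chamber (n - 1). \<forall>u w.
                  tends_within n (\<lambda>y. bilin n (gmat n y) (dup k u) (dup k w))
                    (bilin (n - 1) (Gt x) u w) (dup k x) (chamber n)) \<and>
               (\<forall>t\<in>{0..<ts}. bilin (n - 1) (Gt (dropc k qs)) (dropc k V) (dropc k V)
                               \<le> bilin n (gmat n (q t)) (qd t) (qd t))))"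
proof -
  interpret collision_geodesic n k ts q qd p qs
    using assms by unfold_locales auto
  have kn: "Suc k < n" and n1: "0 < n - 1"
    using k by simp_all
  obtain V where V: "\<forall>i<n. ((\<lambda>t. qd t i) \<longlongrightarrow> V i) (at_left ts)" and Vk: "V k = V (Suc k)"
    using velocity_converges by blast
  have energy_le: "bilin (n - 1) (gmat_expl (n - 1) (dropc k qs)) (dropc k V) (dropc k V)
      \<le> bilin n (gmat n (q t)) (qd t) (qd t)" if "t \<in> {0..<ts}" for t
    using restricted_energy_le[OF V Vk that] bilin_gmat_expl[OF n1] bilin_gmat[OF q_chamber[OF that] n_pos]
    by simp
  show ?thesis
    using momentum_pair_sum_converges momentum_other_converges V Vk energy_le
      riemannian_gmat_expl[OF n1] gmat_restriction_tends[OF kn]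
    by (intro conjI exI[of _ V] exI[of _ "gmat_expl (n - 1)"]) auto
qed

end
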